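(* Let $\mathcal{A}\subseteq\mathcal{B}(\mathcal{H})$ be a von Neumann algebra on a complex separable Hilbert space, let $\tau_t(X)=\mathrm{U}_tX\mathrm{U}_t^{-1}$ be automorphisms of $\mathcal{A}$ implemented by a strongly continuous unitary representation $\mathrm{U}$ of $(\mathbb{R},+)$ with $t\mapsto\tau_t(X)$ norm continuous for every $X\in\mathcal{A}$. Let $\omega$ be a normal state with density operator $W$, let $P\in\mathcal{A}$ be a projection that is analytic for $\tau$, write $P_t=\tau_t(P)$, and let $t_1>0$. If $\omega(P_{t_1})\neq\omega_P(P_{t_1})$, then the set $$S=\{t\in[0,t_1]:\ \omega(P_t)=\omega_P(P_t)\}$$ is at most countable and discrete (every $t_0\in S$ has a neighbourhood $\{t:|t-t_0|<r\}$, $r>0$, meeting $S$ only in $t_0$). Consequently the mark induced by $P$ is manifested at $P_t$ for every $t\in(0,t_1]$ except for a countable set of isolated points, i.e. the process $\langle\mathcal{A},\mathbb{R},\tau\rangle$ is CSIP-causal.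
   Context: $\omega(X)=\mathrm{tr}(WX)$; $\omega_P(X)=\mathrm{tr}(W_PX)$ with $W_P=PWP+(I-P)W(I-P)$. An element $A\in\mathcal{A}$ is analytic for $\tau$ if there exist $\lambda>0$ and a function $f:I_\lambda\to\mathcal{A}$ on the strip $I_\lambda=\{z\in\mathbb{C}:|\mathrm{Im}\,z|<\lambda\}$ with $f(t)=\tau_t(A)$ for real $t$ and $z\mapsto\eta(f(z))$ analytic on $I_\lambda$ for every continuous linear functional $\eta\in\mathcal{A}^*$. A process $\langle\mathcal{A},\mathbb{R},\tau\rangle$ is CSIP-causal if for some normal state $\omega$, observable $Q$ and projection $P$, the mark is manifested ($\omega(\tau_t(Q))\neq\omega_P(\tau_t(Q))$) for every $t\in(0,t_1]$ of some closed interval $[0,t_1]$ except for a countable set of values of $t$ that are isolated in the usual metric of $\mathbb{R}$. *)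

theory Defs
  imports "HOL-Analysis.Analysis"
begin

text \<open>A complex separable Hilbert space is modelled concretely (up to unitary
isomorphism) as l2(I) for an index set I of natural numbers: square-summable
sequences vanishing outside I. Bounded operators are complex-linear bounded
maps on l2(I), extended by 0 outside l2(I) (so that equality of operators is
equality of functions).\<close>

type_synonym vec = "nat \<Rightarrow> complex"
type_synonym op = "vec \<Rightarrow> vec"

definition l2 :: "nat set \<Rightarrow> vec set" where
  "l2 I = {x. (\<forall>n. n \<notin> I \<longrightarrow> x n = 0) \<and> summable (\<lambda>n. (cmod (x n))\<^sup>2)}"

definition vinner :: "vec \<Rightarrow> vec \<Rightarrow> complex" where
  "vinner x y = (\<Sum>n. cnj (x n) * y n)"

definition vnorm :: "vec \<Rightarrow> real" where
  "vnorm x = sqrt (\<Sum>n. (cmod (x n))\<^sup>2)"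

definition vzero :: vec where "vzero = (\<lambda>_. 0)"

definition basis_vec :: "nat \<Rightarrow> vec" where
  "basis_vec k = (\<lambda>n. if n = k then 1 else 0)"

definition bop :: "nat set \<Rightarrow> op set" where
  "bop I = {T. (\<forall>x\<in>l2 I. T x \<in> l2 I)
     \<and> (\<forall>x\<in>l2 I. \<forall>y\<in>l2 I. \<forall>a::complex. T (\<lambda>n. a * x n + y n) = (\<lambda>n. a * T x n + T y n))
     \<and> (\<exists>C. \<forall>x\<in>l2 I. vnorm (T x) \<le> C * vnorm x)
     \<and> (\<forall>x. x \<notin> l2 I \<longrightarrow> T x = vzero)}"

definition idop :: "nat set \<Rightarrow> op" where
  "idop I = (\<lambda>x. if x \<in> l2 I then x else vzero)"

definition opminus :: "nat set \<Rightarrow> op \<Rightarrow> op \<Rightarrow> op" where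
  "opminus I S T = (\<lambda>x. if x \<in> l2 I then (\<lambda>n. S x n - T x n) else vzero)"

definition opplus :: "nat set \<Rightarrow> op \<Rightarrow> op \<Rightarrow> op" where
  "opplus I S T = (\<lambda>x. if x \<in> l2 I then (\<lambda>n. S x n + T x n) else vzero)"

definition opscale :: "nat set \<Rightarrow> complex \<Rightarrow> op \<Rightarrow> op" where
  "opscale I a T = (\<lambda>x. if x \<in> l2 I then (\<lambda>n. a * T x n) else vzero)"

definition opnorm :: "nat set \<Rightarrow> op \<Rightarrow> real" where
  "opnorm I T = Sup ((\<lambda>x. vnorm (T x)) ` {x \<in> l2 I. vnorm x \<le> 1})"

definition opinv :: "nat set \<Rightarrow> op \<Rightarrow> op" where
  "opinv I T = (\<lambda>x. if x \<in> l2 I then inv_into (l2 I) T x else vzero)"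

definition is_adjoint :: "nat set \<Rightarrow> op \<Rightarrow> op \<Rightarrow> bool" where
  "is_adjoint I T S \<longleftrightarrow> S \<in> bop I \<and> (\<forall>x\<in>l2 I. \<forall>y\<in>l2 I. vinner (T x) y = vinner x (S y))"

definition adjoint :: "nat set \<Rightarrow> op \<Rightarrow> op" where
  "adjoint I T = (THE S. is_adjoint I T S)"

definition commutant :: "nat set \<Rightarrow> op set \<Rightarrow> op set" where
  "commutant I S = {T \<in> bop I. \<forall>X\<in>S. T \<circ> X = X \<circ> T}"

definition von_neumann_algebra :: "nat set \<Rightarrow> op set \<Rightarrow> bool" where
  "von_neumann_algebra I A \<longleftrightarrow> A \<subseteq> bop I \<and> (\<forall>X\<in>A. adjoint I X \<in> A)
     \<and> commutant I (commutant I A) = A"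

definition self_adjoint :: "nat set \<Rightarrow> op \<Rightarrow> bool" where
  "self_adjoint I T \<longleftrightarrow> T \<in> bop I \<and> adjoint I T = T"

definition projection :: "nat set \<Rightarrow> op \<Rightarrow> bool" where
  "projection I P \<longleftrightarrow> self_adjoint I P \<and> P \<circ> P = P"

definition unitary :: "nat set \<Rightarrow> op \<Rightarrow> bool" where
  "unitary I U \<longleftrightarrow> U \<in> bop I \<and> bij_betw U (l2 I) (l2 I)
     \<and> (\<forall>x\<in>l2 I. \<forall>y\<in>l2 I. vinner (U x) (U y) = vinner x y)"

definition strongly_cont_unitary_rep :: "nat set \<Rightarrow> (real \<Rightarrow> op) \<Rightarrow> bool" where
  "strongly_cont_unitary_rep I U \<longleftrightarrow> (\<forall>t. unitary I (U t)) \<and> U 0 = idop I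
     \<and> (\<forall>s t. U (s + t) = U s \<circ> U t)
     \<and> (\<forall>x\<in>l2 I. \<forall>t0. ((\<lambda>t. vnorm (\<lambda>n. U t x n - U t0 x n)) \<longlongrightarrow> 0) (at t0))"

definition tau :: "nat set \<Rightarrow> (real \<Rightarrow> op) \<Rightarrow> real \<Rightarrow> op \<Rightarrow> op" where
  "tau I U t X = U t \<circ> X \<circ> opinv I (U t)"

definition trace :: "nat set \<Rightarrow> op \<Rightarrow> complex" where
  "trace I T = (\<Sum>n. if n \<in> I then vinner (basis_vec n) (T (basis_vec n)) else 0)"

definition positive_op :: "nat set \<Rightarrow> op \<Rightarrow> bool" where
  "positive_op I T \<longleftrightarrow> T \<in> bop I \<and> (\<forall>x\<in>l2 I. Im (vinner x (T x)) = 0 \<and> Re (vinner x (T x)) \<ge> 0)"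

definition density_operator :: "nat set \<Rightarrow> op \<Rightarrow> bool" where
  "density_operator I W \<longleftrightarrow> positive_op I W
     \<and> summable (\<lambda>n. if n \<in> I then Re (vinner (basis_vec n) (W (basis_vec n))) else 0)
     \<and> trace I W = 1"

definition omega :: "nat set \<Rightarrow> op \<Rightarrow> op \<Rightarrow> complex" where
  "omega I W X = trace I (W \<circ> X)"

definition W_P :: "nat set \<Rightarrow> op \<Rightarrow> op \<Rightarrow> op" where
  "W_P I P W = opplus I (P \<circ> W \<circ> P)
      (opminus I (idop I) P \<circ> W \<circ> opminus I (idop I) P)"

definition strip :: "real \<Rightarrow> complex set" where
  "strip l = {z. \<bar>Im z\<bar> < l}"

definition cont_lin_functional :: "nat set \<Rightarrow> op set \<Rightarrow> (op \<Rightarrow> complex) \<Rightarrow> bool" where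
  "cont_lin_functional I A \<eta> \<longleftrightarrow>
     (\<forall>X\<in>A. \<forall>Y\<in>A. \<forall>a. \<eta> (opplus I (opscale I a X) Y) = a * \<eta> X + \<eta> Y)
     \<and> (\<exists>C. \<forall>X\<in>A. cmod (\<eta> X) \<le> C * opnorm I X)"

definition analytic_elem :: "nat set \<Rightarrow> op set \<Rightarrow> (real \<Rightarrow> op) \<Rightarrow> op \<Rightarrow> bool" where
  "analytic_elem I A U X \<longleftrightarrow> (\<exists>l>0. \<exists>f. (\<forall>z\<in>strip l. f z \<in> A)
     \<and> (\<forall>t::real. f (complex_of_real t) = tau I U t X)
     \<and> (\<forall>\<eta>. cont_lin_functional I A \<eta> \<longrightarrow> (\<lambda>z. \<eta> (f z)) analytic_on strip l))"

definition CSIP_causal :: "nat set \<Rightarrow> op set \<Rightarrow> (real \<Rightarrow> op) \<Rightarrow> bool" where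
  "CSIP_causal I A U \<longleftrightarrow> (\<exists>W Q P t1 E. density_operator I W \<and> Q \<in> A \<and> self_adjoint I Q
     \<and> P \<in> A \<and> projection I P \<and> t1 > 0 \<and> countable E
     \<and> (\<forall>t0\<in>E. \<exists>r>0. \<forall>t\<in>E. \<bar>t - t0\<bar> < r \<longrightarrow> t = t0)
     \<and> (\<forall>t\<in>{0<..t1} - E. omega I W (tau I U t Q) \<noteq> omega I (W_P I P W) (tau I U t Q)))"

end

theory Submission
  imports Defs "HOL-Complex_Analysis.Conformal_Mappings"
begin

text \<open>
  The function \<open>t \<mapsto> \<omega>(P\<^sub>t) - \<omega>\<^sub>P(P\<^sub>t)\<close> is the restriction to the real axis of
  \<open>z \<mapsto> \<eta>(f z)\<close>, where \<open>f\<close> is the analytic extension of \<open>t \<mapsto> \<tau>\<^sub>t(P)\<close> to a strip and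
  \<open>\<eta> = \<omega> - \<omega>\<^sub>P\<close>. As soon as \<open>\<eta>\<close> is a norm-continuous linear functional on \<open>\<A>\<close>, this
  is a holomorphic function on a connected open set that does not vanish at \<open>t\<^sub>1\<close>, so
  its real zeros are isolated and countable.

  The real work is the continuity of \<open>\<eta>\<close>. For a positive operator \<open>W\<close> of finite
  trace and two Bessel families \<open>(u\<^sub>n)\<close>, \<open>(u'\<^sub>n)\<close> with bounds \<open>c\<close>, \<open>c'\<close> one has
  \<open>\<Sum>\<^sub>n |\<langle>u\<^sub>n, W u'\<^sub>n\<rangle>| \<le> c c' tr W\<close>: by Cauchy-Schwarz for the form \<open>\<langle>x, W y\<rangle>\<close> it
  suffices to show \<open>\<Sum>\<^sub>n \<langle>u\<^sub>n, W u\<^sub>n\<rangle> \<le> c\<^sup>2 tr W\<close>, and on finite sections the difference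
  is \<open>tr(W (c\<^sup>2 - \<Sum>\<^sub>n u\<^sub>n u\<^sub>n\<^sup>*))\<close>, the trace of a product of two positive semidefinite
  matrices. Writing \<open>\<langle>e\<^sub>n, R y\<rangle> = \<langle>row\<^sub>n R, y\<rangle>\<close>, the series defining \<open>\<omega>(X)\<close> and
  \<open>\<omega>\<^sub>P(X)\<close> are of this shape, with the basis, the rows of \<open>P\<close> and \<open>1 - P\<close> and the
  columns of bounded operators as Bessel families.
\<close>

section \<open>Square-summable sequences\<close>

lemma l2_outside: "x \<in> l2 I \<Longrightarrow> n \<notin> I \<Longrightarrow> x n = 0"
  by (simp add: l2_def)

lemma l2_summable: "x \<in> l2 I \<Longrightarrow> summable (\<lambda>n. (cmod (x n))\<^sup>2)"
  by (simp add: l2_def)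

lemma summable_cmod_mult_l2:
  assumes "x \<in> l2 I" "y \<in> l2 I"
  shows "summable (\<lambda>n. cmod (x n) * cmod (y n))"
proof (rule summable_comparison_test'[where N=0])
  show "summable (\<lambda>n. (cmod (x n))\<^sup>2 + (cmod (y n))\<^sup>2)"
    using assms by (intro summable_add l2_summable)
  fix n
  have "2 * cmod (x n) * cmod (y n) \<le> (cmod (x n))\<^sup>2 + (cmod (y n))\<^sup>2"
    by (rule sum_squares_bound)
  moreover have "0 \<le> cmod (x n) * cmod (y n)" by simp
  ultimately show "norm (cmod (x n) * cmod (y n)) \<le> (cmod (x n))\<^sup>2 + (cmod (y n))\<^sup>2"
    by (simp only: real_norm_def abs_of_nonneg)
qed

lemma vinner_summable:
  assumes "x \<in> l2 I" "y \<in> l2 I"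
  shows "summable (\<lambda>n. cnj (x n) * y n)"
  by (rule summable_norm_cancel) (use summable_cmod_mult_l2[OF assms] in \<open>simp add: norm_mult\<close>)

lemma l2_lincomb:
  assumes "x \<in> l2 I" "y \<in> l2 I"
  shows "(\<lambda>n. a * x n + y n) \<in> l2 I"
proof -
  have "summable (\<lambda>n. (cmod (a * x n + y n))\<^sup>2)"
  proof (rule summable_comparison_test'[where N=0])
    show "summable (\<lambda>n. 2 * (cmod a)\<^sup>2 * (cmod (x n))\<^sup>2 + 2 * (cmod (y n))\<^sup>2)"
      using assms by (intro summable_add summable_mult l2_summable)
    fix n
    have "cmod (a * x n + y n) \<le> cmod a * cmod (x n) + cmod (y n)"
      by (metis norm_mult norm_triangle_ineq)
    then have "(cmod (a * x n + y n))\<^sup>2 \<le> (cmod a * cmod (x n) + cmod (y n))\<^sup>2"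
      by (simp add: power_mono)
    also have "\<dots> \<le> 2 * (cmod a)\<^sup>2 * (cmod (x n))\<^sup>2 + 2 * (cmod (y n))\<^sup>2"
      using sum_squares_bound[of "cmod a * cmod (x n)" "cmod (y n)"]
      by (simp add: power2_sum power_mult_distrib)
    finally show "norm ((cmod (a * x n + y n))\<^sup>2) \<le> 2 * (cmod a)\<^sup>2 * (cmod (x n))\<^sup>2 + 2 * (cmod (y n))\<^sup>2"
      by simp
  qed
  then show ?thesis using assms by (simp add: l2_def)
qed

lemma vzero_l2 [simp]: "vzero \<in> l2 I"
  by (simp add: l2_def vzero_def)

lemma l2_scale: "x \<in> l2 I \<Longrightarrow> (\<lambda>n. a * x n) \<in> l2 I"
  using l2_lincomb[OF _ vzero_l2, of x I a] by (simp add: vzero_def)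

lemma l2_add: "x \<in> l2 I \<Longrightarrow> y \<in> l2 I \<Longrightarrow> (\<lambda>n. x n + y n) \<in> l2 I"
  using l2_lincomb[of x I y 1] by simp

lemma l2_diff: "x \<in> l2 I \<Longrightarrow> y \<in> l2 I \<Longrightarrow> (\<lambda>n. x n - y n) \<in> l2 I"
  using l2_lincomb[of y I x "-1"] by simp

lemma l2_finite_support:
  assumes "finite J" "J \<subseteq> I" "\<And>k. k \<notin> J \<Longrightarrow> x k = 0"
  shows "x \<in> l2 I"
proof -
  have "summable (\<lambda>n. (cmod (x n))\<^sup>2)"
    by (rule summable_finite[OF assms(1)]) (use assms in auto)
  then show ?thesis using assms by (auto simp: l2_def)
qed

lemma basis_vec_l2: "k \<in> I \<Longrightarrow> basis_vec k \<in> l2 I"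
  by (rule l2_finite_support[of "{k}"]) (auto simp: basis_vec_def)

lemma basis_combination_apply:
  "finite J \<Longrightarrow> (\<Sum>i\<in>J. d i * basis_vec i k) = (if k \<in> J then d k else 0)"
  unfolding basis_vec_def by (simp add: if_distrib[of "\<lambda>t. _ * t"] cong: if_cong)

lemma basis_combination_l2:
  "finite J \<Longrightarrow> J \<subseteq> I \<Longrightarrow> (\<lambda>k. \<Sum>i\<in>J. d i * basis_vec i k) \<in> l2 I"
  by (rule l2_finite_support) (auto simp: basis_combination_apply)

lemma vinner_finite_support:
  assumes "finite J" "\<And>k. k \<notin> J \<Longrightarrow> x k = 0"
  shows "vinner x y = (\<Sum>k\<in>J. cnj (x k) * y k)"
  unfolding vinner_def by (rule suminf_finite) (use assms in auto)

lemma vinner_basis_vec: "vinner (basis_vec n) y = y n"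
  by (subst vinner_finite_support[of "{n}"]) (auto simp: basis_vec_def)

lemma vnorm_sq: "x \<in> l2 I \<Longrightarrow> (vnorm x)\<^sup>2 = (\<Sum>n. (cmod (x n))\<^sup>2)"
  unfolding vnorm_def by (simp add: suminf_nonneg l2_summable)

lemma vnorm_nonneg: "x \<in> l2 I \<Longrightarrow> vnorm x \<ge> 0"
  by (simp add: vnorm_def suminf_nonneg l2_summable)

lemma vnorm_vzero [simp]: "vnorm vzero = 0"
  by (simp add: vnorm_def vzero_def)

lemma vnorm_sq_finite_support:
  assumes "finite J" "\<And>k. k \<notin> J \<Longrightarrow> x k = 0"
  shows "(vnorm x)\<^sup>2 = (\<Sum>k\<in>J. (cmod (x k))\<^sup>2)"
  unfolding vnorm_def
  by (subst suminf_finite[OF assms(1)]) (use assms in \<open>auto intro: sum_nonneg\<close>)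

lemma vnorm_eq_0_iff: "x \<in> l2 I \<Longrightarrow> vnorm x = 0 \<longleftrightarrow> x = vzero"
  using vnorm_sq[of x I] l2_summable[of x I] by (auto simp: suminf_eq_zero_iff vzero_def)

lemma sum_sq_le_vnorm_sq:
  assumes "x \<in> l2 I" "finite F"
  shows "(\<Sum>n\<in>F. (cmod (x n))\<^sup>2) \<le> (vnorm x)\<^sup>2"
  unfolding vnorm_sq[OF assms(1)] by (rule sum_le_suminf[OF l2_summable[OF assms(1)] assms(2)]) auto

lemma cmod_le_vnorm: "x \<in> l2 I \<Longrightarrow> cmod (x n) \<le> vnorm x"
  using sum_sq_le_vnorm_sq[of x I "{n}"] vnorm_nonneg[of x I] by (simp add: abs_le_square_iff)

lemma vinner_lincomb_right:
  assumes "x \<in> l2 I" "y \<in> l2 I" "z \<in> l2 I"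
  shows "vinner x (\<lambda>n. a * y n + z n) = a * vinner x y + vinner x z"
proof -
  have "vinner x (\<lambda>n. a * y n + z n) = (\<Sum>n. a * (cnj (x n) * y n) + cnj (x n) * z n)"
    unfolding vinner_def by (simp add: algebra_simps)
  also have "\<dots> = (\<Sum>n. a * (cnj (x n) * y n)) + (\<Sum>n. cnj (x n) * z n)"
    by (rule suminf_add[symmetric]) (use assms vinner_summable in \<open>auto intro: summable_mult\<close>)
  also have "\<dots> = a * vinner x y + vinner x z"
    unfolding vinner_def by (simp add: suminf_mult vinner_summable[OF assms(1,2)])
  finally show ?thesis .
qed

lemma vinner_commute_cnj:
  assumes "x \<in> l2 I" "y \<in> l2 I"
  shows "vinner y x = cnj (vinner x y)"
proof -
  have "(\<lambda>n. cnj (x n) * y n) sums vinner x y"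
    unfolding vinner_def using vinner_summable[OF assms] by (simp add: summable_sums)
  then have "(\<lambda>n. cnj (cnj (x n) * y n)) sums cnj (vinner x y)" by (simp only: sums_cnj)
  then have "(\<lambda>n. cnj (y n) * x n) sums cnj (vinner x y)" by (simp add: mult.commute)
  then show ?thesis unfolding vinner_def by (rule sums_unique[symmetric])
qed

lemma vinner_lincomb_left:
  assumes "x \<in> l2 I" "y \<in> l2 I" "z \<in> l2 I"
  shows "vinner (\<lambda>n. a * x n + y n) z = cnj a * vinner x z + vinner y z"
  using vinner_lincomb_right[OF assms(3,1,2), of a]
    vinner_commute_cnj[OF assms(3) l2_lincomb[OF assms(1,2)]] vinner_commute_cnj[OF assms(3,1)]
    vinner_commute_cnj[OF assms(3,2)]
  by simp

lemma vinner_diff_left: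
  "x \<in> l2 I \<Longrightarrow> y \<in> l2 I \<Longrightarrow> z \<in> l2 I \<Longrightarrow> vinner (\<lambda>n. x n - y n) z = vinner x z - vinner y z"
  using vinner_lincomb_left[of y I x z "-1"] by simp

lemma vinner_diff_right:
  "x \<in> l2 I \<Longrightarrow> y \<in> l2 I \<Longrightarrow> z \<in> l2 I \<Longrightarrow> vinner x (\<lambda>n. y n - z n) = vinner x y - vinner x z"
  using vinner_lincomb_right[of x I z y "-1"] by simp

lemma vinner_sum_right:
  assumes "d \<in> l2 I" "finite J" "\<And>j. j \<in> J \<Longrightarrow> w j \<in> l2 I"
  shows "(\<lambda>k. \<Sum>j\<in>J. a j * w j k) \<in> l2 I
    \<and> vinner d (\<lambda>k. \<Sum>j\<in>J. a j * w j k) = (\<Sum>j\<in>J. a j * vinner d (w j))"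
  using assms(2,3)
proof (induction J rule: finite_induct)
  case empty
  then show ?case using vzero_l2[of I] by (simp add: vinner_def vzero_def)
next
  case (insert j J)
  then have IH: "(\<lambda>k. \<Sum>j\<in>J. a j * w j k) \<in> l2 I"
      "vinner d (\<lambda>k. \<Sum>j\<in>J. a j * w j k) = (\<Sum>j\<in>J. a j * vinner d (w j))"
    and wj: "w j \<in> l2 I" by auto
  have "(\<lambda>k. \<Sum>j\<in>insert j J. a j * w j k) = (\<lambda>k. a j * w j k + (\<Sum>j\<in>J. a j * w j k))"
    using insert by simp
  then show ?case
    using l2_lincomb[OF wj IH(1)] vinner_lincomb_right[OF assms(1) wj IH(1), of "a j"] IH(2) insert
    by simp
qed

lemma vinner_self: "x \<in> l2 I \<Longrightarrow> vinner x x = complex_of_real ((vnorm x)\<^sup>2)"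
proof -
  assume x: "x \<in> l2 I"
  have "(\<lambda>n. cnj (x n) * x n) = (\<lambda>n. complex_of_real ((cmod (x n))\<^sup>2))"
    by (metis complex_norm_square mult.commute)
  then have "vinner x x = (\<Sum>n. complex_of_real ((cmod (x n))\<^sup>2))" by (simp add: vinner_def)
  also have "\<dots> = complex_of_real (\<Sum>n. (cmod (x n))\<^sup>2)"
    by (subst suminf_of_real[OF l2_summable[OF x]]) (simp add: of_real_power)
  finally show ?thesis by (simp add: vnorm_sq[OF x])
qed

lemma vinner_Cauchy_Schwarz:
  assumes x: "x \<in> l2 I" and y: "y \<in> l2 I"
  shows "cmod (vinner x y) \<le> vnorm x * vnorm y"
proof -
  have sum_le: "sqrt (\<Sum>n<N. (cmod (z n))\<^sup>2) \<le> vnorm z" if "z \<in> l2 I" for z N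
    unfolding vnorm_def using that
    by (intro real_sqrt_le_mono sum_le_suminf l2_summable) auto
  have partial: "(\<Sum>n<N. cmod (x n) * cmod (y n)) \<le> vnorm x * vnorm y" for N
  proof -
    have "(\<Sum>n<N. cmod (x n) * cmod (y n))
        \<le> L2_set (\<lambda>n. cmod (x n)) {..<N} * L2_set (\<lambda>n. cmod (y n)) {..<N}"
      using L2_set_mult_ineq[of "\<lambda>n. cmod (x n)" "\<lambda>n. cmod (y n)" "{..<N}"] by simp
    also have "\<dots> \<le> vnorm x * vnorm y"
      unfolding L2_set_def using sum_le[OF x] sum_le[OF y] vnorm_nonneg[OF x]
      by (intro mult_mono) (auto intro: sum_nonneg)
    finally show ?thesis .
  qed
  have "cmod (vinner x y) \<le> (\<Sum>n. cmod (x n) * cmod (y n))"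
    unfolding vinner_def
    using summable_norm[of "\<lambda>n. cnj (x n) * y n"] summable_cmod_mult_l2[OF x y]
    by (simp add: norm_mult)
  also have "\<dots> \<le> vnorm x * vnorm y"
    by (rule suminf_le_const[OF summable_cmod_mult_l2[OF x y] partial])
  finally show ?thesis .
qed

lemma vnorm_scale: "x \<in> l2 I \<Longrightarrow> vnorm (\<lambda>n. a * x n) = cmod a * vnorm x"
proof -
  assume x: "x \<in> l2 I"
  have "(vnorm (\<lambda>n. a * x n))\<^sup>2 = (\<Sum>n. (cmod a)\<^sup>2 * (cmod (x n))\<^sup>2)"
    using vnorm_sq[OF l2_scale[OF x]] by (simp add: norm_mult power_mult_distrib)
  also have "\<dots> = (cmod a * vnorm x)\<^sup>2"
    by (simp add: suminf_mult l2_summable[OF x] vnorm_sq[OF x] power_mult_distrib)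
  finally show ?thesis
    by (metis norm_ge_zero vnorm_nonneg l2_scale x mult_nonneg_nonneg power2_eq_iff_nonneg)
qed

lemma vnorm_triangle:
  assumes x: "x \<in> l2 I" and y: "y \<in> l2 I"
  shows "vnorm (\<lambda>n. x n + y n) \<le> vnorm x + vnorm y"
proof -
  have s: "(\<lambda>n. x n + y n) \<in> l2 I" using x y by (rule l2_add)
  have "complex_of_real ((vnorm (\<lambda>n. x n + y n))\<^sup>2) = vinner x x + vinner x y + (vinner y x + vinner y y)"
    using vinner_self[OF s] vinner_lincomb_left[OF x y s, of 1]
      vinner_lincomb_right[OF x x y, of 1] vinner_lincomb_right[OF y x y, of 1]
    by simp
  from arg_cong[OF this, of Re]
  have "(vnorm (\<lambda>n. x n + y n))\<^sup>2 = (vnorm x)\<^sup>2 + (vnorm y)\<^sup>2 + 2 * Re (vinner x y)"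
    unfolding vinner_self[OF x] vinner_self[OF y] vinner_commute_cnj[OF x y] by simp
  moreover have "Re (vinner x y) \<le> vnorm x * vnorm y"
    using vinner_Cauchy_Schwarz[OF x y] complex_Re_le_cmod order_trans by blast
  ultimately have "(vnorm (\<lambda>n. x n + y n))\<^sup>2 \<le> (vnorm x + vnorm y)\<^sup>2"
    by (simp add: power2_sum)
  then show ?thesis using vnorm_nonneg x y by (meson add_nonneg_nonneg power2_le_imp_le)
qed

definition trunc :: "nat \<Rightarrow> vec \<Rightarrow> vec" where
  "trunc K x = (\<lambda>n. if n < K then x n else 0)"

lemma trunc_eq_basis_combination:
  assumes "x \<in> l2 I"
  shows "trunc K x = (\<lambda>k. \<Sum>j\<in>I \<inter> {..<K}. x j * basis_vec j k)"
  using l2_outside[OF assms] by (auto simp: trunc_def basis_combination_apply)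

lemma trunc_l2: "x \<in> l2 I \<Longrightarrow> trunc K x \<in> l2 I"
  by (rule l2_finite_support[of "I \<inter> {..<K}"]) (auto simp: trunc_def l2_outside)

lemma vnorm_trunc_le: assumes "x \<in> l2 I" shows "vnorm (trunc K x) \<le> vnorm x"
proof -
  have "(vnorm (trunc K x))\<^sup>2 = (\<Sum>k\<in>{..<K}. (cmod (x k))\<^sup>2)"
    by (subst vnorm_sq_finite_support[of "{..<K}"]) (auto simp: trunc_def)
  also have "\<dots> \<le> (vnorm x)\<^sup>2" by (rule sum_sq_le_vnorm_sq[OF assms]) simp
  finally show ?thesis by (rule power2_le_imp_le[OF _ vnorm_nonneg[OF assms]])
qed

lemma vnorm_diff_trunc_tendsto:
  assumes x: "x \<in> l2 I"
  shows "(\<lambda>K. vnorm (\<lambda>n. x n - trunc K x n)) \<longlonglongrightarrow> 0"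
proof -
  let ?f = "\<lambda>n. (cmod (x n))\<^sup>2"
  have s: "summable ?f" by (rule l2_summable[OF x])
  have eq: "(vnorm (\<lambda>n. x n - trunc K x n))\<^sup>2 = suminf ?f - (\<Sum>i<K. ?f i)" for K
  proof -
    have "(vnorm (\<lambda>n. x n - trunc K x n))\<^sup>2 = (\<Sum>n. ?f n - (if n < K then ?f n else 0))"
      by (subst vnorm_sq[OF l2_diff[OF x trunc_l2[OF x]]]) (auto simp: trunc_def intro!: suminf_cong)
    also have "\<dots> = suminf ?f - (\<Sum>n. if n < K then ?f n else 0)"
      by (rule suminf_diff[symmetric, OF s]) (rule summable_finite[of "{..<K}"], auto)
    also have "(\<Sum>n. if n < K then ?f n else 0) = (\<Sum>i<K. ?f i)"
      by (subst suminf_finite[of "{..<K}"]) auto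
    finally show ?thesis .
  qed
  have "(\<lambda>K. suminf ?f - (\<Sum>i<K. ?f i)) \<longlonglongrightarrow> suminf ?f - suminf ?f"
    by (intro tendsto_diff tendsto_const summable_LIMSEQ[OF s])
  then have "(\<lambda>K. sqrt ((vnorm (\<lambda>n. x n - trunc K x n))\<^sup>2)) \<longlonglongrightarrow> sqrt 0"
    by (intro tendsto_real_sqrt) (simp add: eq)
  then show ?thesis using vnorm_nonneg[OF l2_diff[OF x trunc_l2[OF x]]] by simp
qed

section \<open>Bounded linear operators on l2\<close>

definition bounded_lin :: "nat set \<Rightarrow> op \<Rightarrow> real \<Rightarrow> bool" where
  "bounded_lin I T c \<longleftrightarrow> c \<ge> 0 \<and> (\<forall>x\<in>l2 I. T x \<in> l2 I)
     \<and> (\<forall>x\<in>l2 I. \<forall>y\<in>l2 I. \<forall>a. T (\<lambda>n. a * x n + y n) = (\<lambda>n. a * T x n + T y n))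
     \<and> (\<forall>x\<in>l2 I. vnorm (T x) \<le> c * vnorm x)"

lemma bounded_lin_l2: "bounded_lin I T c \<Longrightarrow> x \<in> l2 I \<Longrightarrow> T x \<in> l2 I"
  by (simp add: bounded_lin_def)

lemma bounded_lin_lincomb:
  "bounded_lin I T c \<Longrightarrow> x \<in> l2 I \<Longrightarrow> y \<in> l2 I \<Longrightarrow> T (\<lambda>n. a * x n + y n) = (\<lambda>n. a * T x n + T y n)"
  by (simp add: bounded_lin_def)

lemma bounded_lin_bound: "bounded_lin I T c \<Longrightarrow> x \<in> l2 I \<Longrightarrow> vnorm (T x) \<le> c * vnorm x"
  by (simp add: bounded_lin_def)

lemma bounded_lin_nonneg: "bounded_lin I T c \<Longrightarrow> c \<ge> 0"
  by (simp add: bounded_lin_def)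

lemma l2_linear_vzero:
  assumes "\<forall>x\<in>l2 I. \<forall>y\<in>l2 I. \<forall>a. T (\<lambda>n. a * x n + y n) = (\<lambda>n. a * T x n + T y n)"
  shows "T vzero = vzero"
proof -
  have "T (\<lambda>n. 1 * vzero n + vzero n) = (\<lambda>n. 1 * T vzero n + T vzero n)"
    using assms vzero_l2 by blast
  then have "T vzero = (\<lambda>n. T vzero n + T vzero n)" by (simp add: vzero_def)
  then have "T vzero n = 0" for n by (metis add_cancel_left_left)
  then show ?thesis by (auto simp: vzero_def)
qed

lemma bounded_lin_diff:
  "bounded_lin I T c \<Longrightarrow> x \<in> l2 I \<Longrightarrow> y \<in> l2 I \<Longrightarrow> T (\<lambda>n. x n - y n) = (\<lambda>n. T x n - T y n)"
  using bounded_lin_lincomb[of I T c y x "-1"] by simp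

lemma bounded_lin_sum:
  assumes "bounded_lin I T c" "finite J" "\<And>j. j \<in> J \<Longrightarrow> v j \<in> l2 I"
  shows "(\<lambda>k. \<Sum>j\<in>J. a j * v j k) \<in> l2 I
    \<and> T (\<lambda>k. \<Sum>j\<in>J. a j * v j k) = (\<lambda>k. \<Sum>j\<in>J. a j * T (v j) k)"
  using assms(2,3)
proof (induction J rule: finite_induct)
  case empty
  then show ?case
    using l2_linear_vzero[of I T] assms(1) by (simp add: bounded_lin_def vzero_def[symmetric])
next
  case (insert j J)
  then have IH: "(\<lambda>k. \<Sum>j\<in>J. a j * v j k) \<in> l2 I"
      "T (\<lambda>k. \<Sum>j\<in>J. a j * v j k) = (\<lambda>k. \<Sum>j\<in>J. a j * T (v j) k)"
    and vj: "v j \<in> l2 I" by auto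
  have "(\<lambda>k. \<Sum>j\<in>insert j J. a j * v j k) = (\<lambda>k. a j * v j k + (\<Sum>j\<in>J. a j * v j k))"
    using insert by simp
  then show ?case
    using l2_lincomb[OF vj IH(1)] bounded_lin_lincomb[OF assms(1) vj IH(1), of "a j"] IH(2) insert
    by simp
qed

lemma bounded_lin_dist:
  assumes "bounded_lin I T c" "x \<in> l2 I" "y \<in> l2 I"
  shows "vnorm (\<lambda>n. T x n - T y n) \<le> c * vnorm (\<lambda>n. x n - y n)"
  using bounded_lin_bound[OF assms(1) l2_diff[OF assms(2,3)]] bounded_lin_diff[OF assms] by simp

lemma bop_bounded_lin:
  assumes T: "T \<in> bop I"
  shows "bounded_lin I T (opnorm I T)"
proof -
  have l2T: "\<And>x. x \<in> l2 I \<Longrightarrow> T x \<in> l2 I"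
    and lin: "\<forall>x\<in>l2 I. \<forall>y\<in>l2 I. \<forall>a. T (\<lambda>n. a * x n + y n) = (\<lambda>n. a * T x n + T y n)"
    using T by (auto simp: bop_def)
  obtain C where C: "\<And>x. x \<in> l2 I \<Longrightarrow> vnorm (T x) \<le> C * vnorm x"
    using T unfolding bop_def by blast
  have bdd: "bdd_above ((\<lambda>x. vnorm (T x)) ` {x \<in> l2 I. vnorm x \<le> 1})"
  proof (rule bdd_aboveI)
    fix s assume "s \<in> (\<lambda>x. vnorm (T x)) ` {x \<in> l2 I. vnorm x \<le> 1}"
    then obtain x where x: "x \<in> l2 I" "vnorm x \<le> 1" "s = vnorm (T x)" by auto
    have "C * vnorm x \<le> max C 0"
      using x vnorm_nonneg[OF x(1)] by (cases "C \<ge> 0") (auto intro: mult_left_le mult_nonpos_nonneg)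
    then show "s \<le> max C 0" using C[OF x(1)] x by linarith
  qed
  have unit_ball: "vnorm (T x) \<le> opnorm I T" if "x \<in> l2 I" "vnorm x \<le> 1" for x
    unfolding opnorm_def by (rule cSup_upper[OF _ bdd]) (use that in auto)
  have Tz: "T vzero = vzero" by (rule l2_linear_vzero[OF lin])
  have nonneg: "opnorm I T \<ge> 0"
    using unit_ball[OF vzero_l2] vnorm_nonneg[OF l2T[OF vzero_l2]] by simp
  have bound: "vnorm (T x) \<le> opnorm I T * vnorm x" if x: "x \<in> l2 I" for x
  proof (cases "vnorm x = 0")
    case True
    then show ?thesis using vnorm_eq_0_iff[OF x] Tz by simp
  next
    case False
    then have p: "vnorm x > 0" using vnorm_nonneg[OF x] by simp
    let ?a = "complex_of_real (1 / vnorm x)"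
    have "T (\<lambda>n. ?a * x n + vzero n) = (\<lambda>n. ?a * T x n + T vzero n)"
      using lin x vzero_l2 by blast
    then have Ty: "T (\<lambda>n. ?a * x n) = (\<lambda>n. ?a * T x n)" unfolding Tz by (simp add: vzero_def)
    have na: "cmod ?a = 1 / vnorm x" using p by (simp add: norm_divide)
    have "vnorm (\<lambda>n. ?a * x n) = 1" using vnorm_scale[OF x, of ?a] p unfolding na by simp
    then have "vnorm (T (\<lambda>n. ?a * x n)) \<le> opnorm I T" by (intro unit_ball l2_scale x) simp
    then have "vnorm (T x) / vnorm x \<le> opnorm I T"
      using vnorm_scale[OF l2T[OF x], of ?a] Ty p unfolding na by (simp add: mult.commute)
    then show ?thesis using p by (simp add: divide_le_eq mult.commute)
  qed
  show ?thesis unfolding bounded_lin_def using nonneg l2T lin bound by blast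
qed

lemma bounded_lin_comp:
  assumes S: "bounded_lin I S a" and T: "bounded_lin I T b"
  shows "bounded_lin I (S \<circ> T) (a * b)"
  unfolding bounded_lin_def
proof (intro conjI ballI allI)
  show "0 \<le> a * b" using bounded_lin_nonneg[OF S] bounded_lin_nonneg[OF T] by simp
  fix x assume x: "x \<in> l2 I"
  show "(S \<circ> T) x \<in> l2 I" using bounded_lin_l2[OF S bounded_lin_l2[OF T x]] by simp
  have "vnorm (S (T x)) \<le> a * vnorm (T x)" by (rule bounded_lin_bound[OF S bounded_lin_l2[OF T x]])
  also have "\<dots> \<le> a * (b * vnorm x)"
    by (rule mult_left_mono[OF bounded_lin_bound[OF T x] bounded_lin_nonneg[OF S]])
  finally show "vnorm ((S \<circ> T) x) \<le> a * b * vnorm x" by (simp add: mult_ac)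
  fix y c assume y: "y \<in> l2 I"
  show "(S \<circ> T) (\<lambda>n. c * x n + y n) = (\<lambda>n. c * (S \<circ> T) x n + (S \<circ> T) y n)"
    using bounded_lin_lincomb[OF T x y, of c]
      bounded_lin_lincomb[OF S bounded_lin_l2[OF T x] bounded_lin_l2[OF T y], of c]
    by simp
qed

lemma bounded_lin_opplus:
  assumes S: "bounded_lin I S a" and T: "bounded_lin I T b"
  shows "bounded_lin I (opplus I S T) (a + b)"
  unfolding bounded_lin_def
proof (intro conjI ballI allI)
  show "0 \<le> a + b" using bounded_lin_nonneg[OF S] bounded_lin_nonneg[OF T] by simp
  fix x assume x: "x \<in> l2 I"
  have e: "opplus I S T x = (\<lambda>n. S x n + T x n)" using x by (simp add: opplus_def)
  show "opplus I S T x \<in> l2 I"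
    unfolding e by (rule l2_add[OF bounded_lin_l2[OF S x] bounded_lin_l2[OF T x]])
  show "vnorm (opplus I S T x) \<le> (a + b) * vnorm x"
    unfolding e using vnorm_triangle[OF bounded_lin_l2[OF S x] bounded_lin_l2[OF T x]]
      bounded_lin_bound[OF S x] bounded_lin_bound[OF T x]
    by (simp add: distrib_right)
  fix y c assume y: "y \<in> l2 I"
  show "opplus I S T (\<lambda>n. c * x n + y n) = (\<lambda>n. c * opplus I S T x n + opplus I S T y n)"
    using x y l2_lincomb[OF x y] bounded_lin_lincomb[OF S x y] bounded_lin_lincomb[OF T x y]
    by (simp add: opplus_def algebra_simps)
qed

lemma bounded_lin_complement:
  assumes P: "bounded_lin I P c"
  shows "bounded_lin I (opminus I (idop I) P) (1 + c)"
  unfolding bounded_lin_def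
proof (intro conjI ballI allI)
  show "0 \<le> 1 + c" using bounded_lin_nonneg[OF P] by simp
  fix x assume x: "x \<in> l2 I"
  have e: "opminus I (idop I) P x = (\<lambda>n. x n + (- 1 * P x n))"
    using x by (simp add: opminus_def idop_def)
  show "opminus I (idop I) P x \<in> l2 I"
    unfolding e by (rule l2_add[OF x l2_scale[OF bounded_lin_l2[OF P x]]])
  have "vnorm (\<lambda>n. x n + (- 1 * P x n)) \<le> vnorm x + vnorm (\<lambda>n. - 1 * P x n)"
    by (rule vnorm_triangle[OF x l2_scale[OF bounded_lin_l2[OF P x]]])
  also have "vnorm (\<lambda>n. - 1 * P x n) = vnorm (P x)"
    using vnorm_scale[OF bounded_lin_l2[OF P x], of "-1"] by simp
  finally show "vnorm (opminus I (idop I) P x) \<le> (1 + c) * vnorm x"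
    unfolding e using bounded_lin_bound[OF P x] by (simp add: distrib_right)
  fix y a assume y: "y \<in> l2 I"
  show "opminus I (idop I) P (\<lambda>n. a * x n + y n)
      = (\<lambda>n. a * opminus I (idop I) P x n + opminus I (idop I) P y n)"
    using x y l2_lincomb[OF x y] bounded_lin_lincomb[OF P x y]
    by (simp add: opminus_def idop_def algebra_simps)
qed

lemma bounded_lin_trunc_tendsto:
  assumes T: "bounded_lin I T c" and z: "z \<in> l2 I"
  shows "(\<lambda>K. T (trunc K z) n) \<longlonglongrightarrow> T z n"
proof -
  have bound: "cmod (T (trunc K z) n - T z n) \<le> c * vnorm (\<lambda>m. z m - trunc K z m)" for K
  proof -
    have "cmod (T z n - T (trunc K z) n) \<le> vnorm (\<lambda>m. T z m - T (trunc K z) m)"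
      using cmod_le_vnorm[OF l2_diff[OF bounded_lin_l2[OF T z] bounded_lin_l2[OF T trunc_l2[OF z]]]]
      by simp
    also have "\<dots> \<le> c * vnorm (\<lambda>m. z m - trunc K z m)"
      by (rule bounded_lin_dist[OF T z trunc_l2[OF z]])
    finally show ?thesis by (simp add: norm_minus_commute)
  qed
  have "(\<lambda>K. c * vnorm (\<lambda>m. z m - trunc K z m)) \<longlonglongrightarrow> 0"
    by (rule tendsto_mult_right_zero[OF vnorm_diff_trunc_tendsto[OF z]])
  then have "(\<lambda>K. T (trunc K z) n - T z n) \<longlonglongrightarrow> 0"
    by (rule Lim_null_comparison[OF always_eventually, rotated]) (use bound in simp)
  then show ?thesis by (simp add: LIM_zero_iff)
qed

lemma le_sq_of_le_mult_sqrt: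
  fixes S k :: real
  assumes "S \<le> k * sqrt S" "S \<ge> 0" "k \<ge> 0"
  shows "S \<le> k\<^sup>2"
proof (cases "S = 0")
  case False
  then have "sqrt S > 0" using assms by simp
  moreover have "sqrt S * sqrt S \<le> k * sqrt S" using assms by simp
  ultimately have "sqrt S \<le> k" by (metis mult_right_le_imp_le)
  then have "(sqrt S)\<^sup>2 \<le> k\<^sup>2" using \<open>sqrt S > 0\<close> by (intro power_mono) auto
  then show ?thesis using assms by simp
qed (use assms in simp)

definition row :: "nat set \<Rightarrow> op \<Rightarrow> nat \<Rightarrow> vec" where
  "row I T n = (\<lambda>k. if k \<in> I then cnj (T (basis_vec k) n) else 0)"

lemma sum_sq_row_entries_le:
  assumes T: "bounded_lin I T c" and J: "finite J" "J \<subseteq> I"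
  shows "(\<Sum>k\<in>J. (cmod (T (basis_vec k) n))\<^sup>2) \<le> c\<^sup>2"
proof -
  let ?S = "\<Sum>k\<in>J. (cmod (T (basis_vec k) n))\<^sup>2"
  define v where "v = (\<lambda>m. \<Sum>k\<in>J. cnj (T (basis_vec k) n) * basis_vec k m)"
  have bl: "\<And>k. k \<in> J \<Longrightarrow> basis_vec k \<in> l2 I" using J by (auto intro: basis_vec_l2)
  have v: "v \<in> l2 I" "T v = (\<lambda>m. \<Sum>k\<in>J. cnj (T (basis_vec k) n) * T (basis_vec k) m)"
    using bounded_lin_sum[OF T J(1) bl] unfolding v_def by auto
  have "(vnorm v)\<^sup>2 = ?S"
    by (subst vnorm_sq_finite_support[OF J(1)]) (auto simp: v_def basis_combination_apply[OF J(1)])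
  then have vnorm_v: "vnorm v = sqrt ?S" using vnorm_nonneg[OF v(1)] by (metis real_sqrt_unique)
  have sq: "cnj (T (basis_vec k) n) * T (basis_vec k) n = complex_of_real ((cmod (T (basis_vec k) n))\<^sup>2)"
    for k by (metis complex_norm_square mult.commute)
  have Tv: "T v n = of_real ?S" unfolding v(2) sq by simp
  have "?S = cmod (T v n)" unfolding Tv norm_of_real by (simp add: sum_nonneg)
  also have "\<dots> \<le> vnorm (T v)" by (rule cmod_le_vnorm[OF bounded_lin_l2[OF T v(1)]])
  also have "\<dots> \<le> c * sqrt ?S" unfolding vnorm_v[symmetric] by (rule bounded_lin_bound[OF T v(1)])
  finally show ?thesis
    by (rule le_sq_of_le_mult_sqrt) (auto intro: sum_nonneg bounded_lin_nonneg[OF T])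
qed

lemma row_l2: assumes T: "bounded_lin I T c" shows "row I T n \<in> l2 I"
proof -
  have "summable (\<lambda>k. (cmod (row I T n k))\<^sup>2)"
  proof (rule summableI_nonneg_bounded)
    fix K
    have "(\<Sum>k<K. (cmod (row I T n k))\<^sup>2) = (\<Sum>k\<in>I \<inter> {..<K}. (cmod (T (basis_vec k) n))\<^sup>2)"
      by (rule sum.mono_neutral_cong_right) (auto simp: row_def)
    also have "\<dots> \<le> c\<^sup>2" by (rule sum_sq_row_entries_le[OF T]) auto
    finally show "(\<Sum>k<K. (cmod (row I T n k))\<^sup>2) \<le> c\<^sup>2" .
  qed simp
  then show ?thesis by (auto simp: l2_def row_def)
qed

lemma bounded_lin_apply_eq_vinner_row:
  assumes T: "bounded_lin I T c" and z: "z \<in> l2 I"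
  shows "T z n = vinner (row I T n) z"
proof -
  have "T (trunc K z) n = (\<Sum>k<K. cnj (row I T n k) * z k)" for K
  proof -
    have bl: "\<And>k. k \<in> I \<inter> {..<K} \<Longrightarrow> basis_vec k \<in> l2 I" by (auto intro: basis_vec_l2)
    have "T (trunc K z) n = (\<Sum>j\<in>I \<inter> {..<K}. z j * T (basis_vec j) n)"
      unfolding trunc_eq_basis_combination[OF z]
      using bounded_lin_sum[OF T finite_Int[OF disjI2[OF finite_lessThan]] bl, where a=z] by simp
    also have "\<dots> = (\<Sum>k<K. cnj (row I T n k) * z k)"
      by (rule sum.mono_neutral_cong_left) (auto simp: row_def l2_outside[OF z])
    finally show ?thesis .
  qed
  moreover have "(\<lambda>K. \<Sum>k<K. cnj (row I T n k) * z k) \<longlonglongrightarrow> vinner (row I T n) z"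
    unfolding vinner_def by (rule summable_LIMSEQ[OF vinner_summable[OF row_l2[OF T] z]])
  ultimately have "(\<lambda>K. T (trunc K z) n) \<longlonglongrightarrow> vinner (row I T n) z" by simp
  then show ?thesis using bounded_lin_trunc_tendsto[OF T z] LIMSEQ_unique by blast
qed

definition bessel_family :: "nat set \<Rightarrow> (nat \<Rightarrow> vec) \<Rightarrow> real \<Rightarrow> bool" where
  "bessel_family I u c \<longleftrightarrow> c \<ge> 0 \<and> (\<forall>n\<in>I. u n \<in> l2 I)
     \<and> (\<forall>d\<in>l2 I. \<forall>F. finite F \<longrightarrow> F \<subseteq> I \<longrightarrow> (\<Sum>n\<in>F. (cmod (vinner d (u n)))\<^sup>2) \<le> c\<^sup>2 * (vnorm d)\<^sup>2)"

lemma bessel_familyD: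
  assumes "bessel_family I u c"
  shows "c \<ge> 0" "n \<in> I \<Longrightarrow> u n \<in> l2 I"
    "d \<in> l2 I \<Longrightarrow> finite F \<Longrightarrow> F \<subseteq> I \<Longrightarrow> (\<Sum>n\<in>F. (cmod (vinner d (u n)))\<^sup>2) \<le> c\<^sup>2 * (vnorm d)\<^sup>2"
  using assms by (auto simp: bessel_family_def)

lemma bessel_family_basis: "bessel_family I basis_vec 1"
  unfolding bessel_family_def
proof (intro conjI ballI allI impI)
  fix d F assume d: "d \<in> l2 I" and F: "finite F" "F \<subseteq> I"
  have "vinner d (basis_vec n) = cnj (d n)" if "n \<in> F" for n
    using vinner_commute_cnj[OF basis_vec_l2 d, of n] F that by (auto simp: vinner_basis_vec)
  then have "(\<Sum>n\<in>F. (cmod (vinner d (basis_vec n)))\<^sup>2) = (\<Sum>n\<in>F. (cmod (d n))\<^sup>2)" by simp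
  also have "\<dots> \<le> (vnorm d)\<^sup>2" by (rule sum_sq_le_vnorm_sq[OF d F(1)])
  finally show "(\<Sum>n\<in>F. (cmod (vinner d (basis_vec n)))\<^sup>2) \<le> 1\<^sup>2 * (vnorm d)\<^sup>2" by simp
qed (auto intro: basis_vec_l2)

lemma bessel_family_rows:
  assumes T: "bounded_lin I T c"
  shows "bessel_family I (row I T) c"
  unfolding bessel_family_def
proof (intro conjI ballI allI impI)
  fix d F assume d: "d \<in> l2 I" and F: "finite F" "F \<subseteq> I"
  have "vinner d (row I T n) = cnj (T d n)" for n
    using bounded_lin_apply_eq_vinner_row[OF T d, of n] vinner_commute_cnj[OF row_l2[OF T] d] by simp
  then have "(\<Sum>n\<in>F. (cmod (vinner d (row I T n)))\<^sup>2) = (\<Sum>n\<in>F. (cmod (T d n))\<^sup>2)" by simp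
  also have "\<dots> \<le> (vnorm (T d))\<^sup>2" by (rule sum_sq_le_vnorm_sq[OF bounded_lin_l2[OF T d] F(1)])
  also have "\<dots> \<le> (c * vnorm d)\<^sup>2"
    using bounded_lin_bound[OF T d] vnorm_nonneg[OF bounded_lin_l2[OF T d]] by (simp add: power_mono)
  finally show "(\<Sum>n\<in>F. (cmod (vinner d (row I T n)))\<^sup>2) \<le> c\<^sup>2 * (vnorm d)\<^sup>2"
    by (simp add: power_mult_distrib)
qed (use bounded_lin_nonneg[OF T] row_l2[OF T] in auto)

lemma bessel_family_columns:
  assumes B: "bounded_lin I B c"
  shows "bessel_family I (\<lambda>n. B (basis_vec n)) c"
  unfolding bessel_family_def
proof (intro conjI ballI allI impI)
  fix d F assume d: "d \<in> l2 I" and F: "finite F" "F \<subseteq> I"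
  define s where "s n = vinner d (B (basis_vec n))" for n
  let ?S = "\<Sum>n\<in>F. (cmod (s n))\<^sup>2"
  define v where "v = (\<lambda>m. \<Sum>n\<in>F. cnj (s n) * basis_vec n m)"
  have bl: "\<And>k. k \<in> F \<Longrightarrow> basis_vec k \<in> l2 I" using F by (auto intro: basis_vec_l2)
  have v: "v \<in> l2 I" "B v = (\<lambda>m. \<Sum>n\<in>F. cnj (s n) * B (basis_vec n) m)"
    using bounded_lin_sum[OF B F(1) bl] unfolding v_def by auto
  have "(vnorm v)\<^sup>2 = ?S"
    by (subst vnorm_sq_finite_support[OF F(1)]) (auto simp: v_def basis_combination_apply[OF F(1)])
  then have vnorm_v: "vnorm v = sqrt ?S" using vnorm_nonneg[OF v(1)] by (metis real_sqrt_unique)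
  have "cnj (s n) * s n = complex_of_real ((cmod (s n))\<^sup>2)" for n
    by (metis complex_norm_square mult.commute)
  then have "(\<Sum>n\<in>F. cnj (s n) * s n) = of_real ?S" by simp
  moreover have "vinner d (B v) = (\<Sum>n\<in>F. cnj (s n) * s n)"
    unfolding v(2) using vinner_sum_right[OF d F(1), of "\<lambda>n. B (basis_vec n)" "\<lambda>n. cnj (s n)"]
      bl bounded_lin_l2[OF B]
    by (simp add: s_def)
  ultimately have Bv: "vinner d (B v) = of_real ?S" by simp
  have "?S = cmod (vinner d (B v))" unfolding Bv norm_of_real by (simp add: sum_nonneg)
  also have "\<dots> \<le> vnorm d * vnorm (B v)" by (rule vinner_Cauchy_Schwarz[OF d bounded_lin_l2[OF B v(1)]])
  also have "\<dots> \<le> vnorm d * (c * sqrt ?S)"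
    unfolding vnorm_v[symmetric] by (rule mult_left_mono[OF bounded_lin_bound[OF B v(1)] vnorm_nonneg[OF d]])
  finally have "?S \<le> (c * vnorm d)\<^sup>2"
    by (intro le_sq_of_le_mult_sqrt)
      (auto simp: mult_ac intro!: sum_nonneg mult_nonneg_nonneg bounded_lin_nonneg[OF B] vnorm_nonneg[OF d])
  then show "(\<Sum>n\<in>F. (cmod (vinner d (B (basis_vec n))))\<^sup>2) \<le> c\<^sup>2 * (vnorm d)\<^sup>2"
    by (simp add: s_def power_mult_distrib)
qed (use bounded_lin_nonneg[OF B] bounded_lin_l2[OF B] basis_vec_l2 in auto)

section \<open>Positive semidefinite matrices\<close>

text \<open>Finite matrices are functions \<open>nat \<Rightarrow> nat \<Rightarrow> complex\<close> restricted to a finite index set \<open>J\<close>.\<close>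

definition sesq :: "nat set \<Rightarrow> (nat \<Rightarrow> nat \<Rightarrow> complex) \<Rightarrow> (nat \<Rightarrow> complex) \<Rightarrow> (nat \<Rightarrow> complex) \<Rightarrow> complex" where
  "sesq J M x y = (\<Sum>k\<in>J. \<Sum>i\<in>J. cnj (x k) * M k i * y i)"

definition psd_matrix :: "nat set \<Rightarrow> (nat \<Rightarrow> nat \<Rightarrow> complex) \<Rightarrow> bool" where
  "psd_matrix J M \<longleftrightarrow> (\<forall>d. Im (sesq J M d d) = 0 \<and> 0 \<le> Re (sesq J M d d))"

definition trace_prod :: "nat set \<Rightarrow> (nat \<Rightarrow> nat \<Rightarrow> complex) \<Rightarrow> (nat \<Rightarrow> nat \<Rightarrow> complex) \<Rightarrow> complex" where
  "trace_prod J W N = (\<Sum>k\<in>J. \<Sum>i\<in>J. W k i * N i k)"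

lemma sesq_restrict:
  assumes "finite J" "J' \<subseteq> J" "\<And>k. k \<notin> J' \<Longrightarrow> x k = 0" "\<And>k. k \<notin> J' \<Longrightarrow> y k = 0"
  shows "sesq J M x y = sesq J' M x y"
proof -
  have "sesq J M x y = (\<Sum>k\<in>J'. \<Sum>i\<in>J. cnj (x k) * M k i * y i)"
    unfolding sesq_def by (rule sum.mono_neutral_right) (use assms in auto)
  also have "\<dots> = sesq J' M x y"
    unfolding sesq_def
    by (rule sum.cong[OF refl], rule sum.mono_neutral_right) (use assms in \<open>auto intro: finite_subset\<close>)
  finally show ?thesis .
qed

lemma sesq_cong: "(\<And>k. k \<in> J \<Longrightarrow> x k = x' k) \<Longrightarrow> (\<And>k. k \<in> J \<Longrightarrow> y k = y' k) \<Longrightarrow> sesq J M x y = sesq J M x' y'"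
  unfolding sesq_def by (intro sum.cong) auto

lemma psd_matrix_subset:
  assumes "finite J" "J' \<subseteq> J" "psd_matrix J M" shows "psd_matrix J' M"
  unfolding psd_matrix_def
proof
  fix d :: "nat \<Rightarrow> complex"
  let ?d = "\<lambda>k. if k \<in> J' then d k else 0"
  have "sesq J M ?d ?d = sesq J' M ?d ?d" by (rule sesq_restrict) (use assms in auto)
  also have "\<dots> = sesq J' M d d" by (rule sesq_cong) auto
  finally show "Im (sesq J' M d d) = 0 \<and> 0 \<le> Re (sesq J' M d d)" using assms(3) unfolding psd_matrix_def by metis
qed

lemma sesq_single:
  assumes "finite J" "k \<in> J"
  shows "sesq J M (\<lambda>j. if j = k then a else 0) (\<lambda>j. if j = k then a else 0) = cnj a * M k k * a"
proof -
  have "sesq J M (\<lambda>j. if j = k then a else 0) (\<lambda>j. if j = k then a else 0) =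
        sesq {k} M (\<lambda>j. if j = k then a else 0) (\<lambda>j. if j = k then a else 0)"
    by (rule sesq_restrict) (use assms in auto)
  then show ?thesis by (simp add: sesq_def)
qed

lemma sesq_pair:
  assumes "finite J" "k \<in> J" "i \<in> J" "k \<noteq> i"
  shows "sesq J M (\<lambda>j. if j = k then a else if j = i then b else 0) (\<lambda>j. if j = k then a else if j = i then b else 0)
    = cnj a * M k k * a + cnj a * M k i * b + cnj b * M i k * a + cnj b * M i i * b"
proof -
  let ?d = "\<lambda>j. if j = k then a else if j = i then b else 0"
  have "sesq J M ?d ?d = sesq {k, i} M ?d ?d"
    by (rule sesq_restrict) (use assms in auto)
  then show ?thesis using assms(4) by (simp add: sesq_def algebra_simps)
qed

lemma psd_matrix_diag: assumes "psd_matrix J M" "finite J" "k \<in> J" shows "Im (M k k) = 0" "Re (M k k) \<ge> 0"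
  using assms(1) sesq_single[OF assms(2,3), where M=M and a=1] unfolding psd_matrix_def
  by (metis complex_cnj_one mult_1 mult_1_right)+

lemma psd_matrix_hermitian:
  assumes P: "psd_matrix J M" and J: "finite J" "k \<in> J" "i \<in> J"
  shows "M i k = cnj (M k i)"
proof (cases "k = i")
  case True
  then show ?thesis using psd_matrix_diag[OF P J(1,2)] by (simp add: complex_eq_iff)
next
  case False
  have d1: "Im (M k k) = 0" "Im (M i i) = 0" using psd_matrix_diag[OF P J(1)] J by auto
  let ?d = "\<lambda>b j. if j = k then 1 else if j = i then b else 0"
  have im: "Im (sesq J M (?d b) (?d b)) = 0" for b
    using P unfolding psd_matrix_def by blast
  have "Im (M k i) + Im (M i k) = 0"
    using im[of 1] sesq_pair[OF J False, where a=1 and b=1 and M=M] d1 by simp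
  moreover have "Re (M k i) - Re (M i k) = 0"
    using im[of \<i>] sesq_pair[OF J False, where a=1 and b=\<i> and M=M] d1 by simp
  ultimately show ?thesis by (simp add: complex_eq_iff)
qed

lemma psd_matrix_zero_diag_row:
  assumes P: "psd_matrix J M" and J: "finite J" "m \<in> J" "i \<in> J" and z: "M m m = 0"
  shows "M m i = 0"
proof (rule ccontr)
  assume ne: "M m i \<noteq> 0"
  then have im: "i \<noteq> m" using z by auto
  let ?p = "M m i"
  have h: "M i m = cnj ?p" by (rule psd_matrix_hermitian[OF P J(1,2,3)])
  define t where "t = (Re (M i i) + 1) / (2 * (cmod ?p)\<^sup>2)"
  have tp: "2 * t * (cmod ?p)\<^sup>2 = Re (M i i) + 1" using ne by (simp add: t_def)
  let ?a = "- (complex_of_real t * ?p)"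
  let ?d = "\<lambda>j. if j = m then ?a else if j = i then 1 else 0"
  have "0 \<le> Re (sesq J M ?d ?d)"
    using P unfolding psd_matrix_def by blast
  also have "sesq J M ?d ?d = cnj ?a * ?p + cnj ?p * ?a + M i i"
    using sesq_pair[OF J(1,2,3) im[symmetric], where a="?a" and b=1 and M=M] z h by simp
  also have "Re (cnj ?a * ?p + cnj ?p * ?a + M i i) = - 2 * t * (cmod ?p)\<^sup>2 + Re (M i i)"
    using cmod_power2[of ?p] by (simp add: algebra_simps power2_eq_square)
  finally show False using tp by linarith
qed

lemma sesq_add_right: "sesq J M x (\<lambda>j. y j + z j) = sesq J M x y + sesq J M x z"
  unfolding sesq_def by (simp add: algebra_simps sum.distrib)
lemma sesq_add_left: "sesq J M (\<lambda>j. y j + z j) x = sesq J M y x + sesq J M z x"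
  unfolding sesq_def by (simp add: algebra_simps sum.distrib)

lemma sesq_delta_right:
  assumes "finite J" "m \<in> J"
  shows "sesq J M x (\<lambda>j. if j = m then t else 0) = (\<Sum>k\<in>J. cnj (x k) * M k m) * t"
  unfolding sesq_def using assms by (simp add: if_distrib[of "\<lambda>s. _ * s"] sum_distrib_right cong: if_cong)

lemma sesq_delta_left:
  assumes "finite J" "m \<in> J"
  shows "sesq J M (\<lambda>j. if j = m then t else 0) y = cnj t * (\<Sum>i\<in>J. M m i * y i)"
  unfolding sesq_def
proof -
  have "\<And>k. (\<Sum>i\<in>J. cnj (if k = m then t else 0) * M k i * y i) = (if k = m then cnj t * (\<Sum>i\<in>J. M m i * y i) else 0)"
    by (simp add: sum_distrib_left mult.assoc)
  then show "(\<Sum>k\<in>J. \<Sum>i\<in>J. cnj (if k = m then t else 0) * M k i * y i) = cnj t * (\<Sum>i\<in>J. M m i * y i)"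
    using assms by simp
qed

definition Schur_complement :: "(nat \<Rightarrow> nat \<Rightarrow> complex) \<Rightarrow> nat \<Rightarrow> nat \<Rightarrow> nat \<Rightarrow> complex" where
  "Schur_complement M m = (\<lambda>k i. M k i - M k m * M m i / M m m)"

lemma sesq_Schur_complement:
  fixes d :: "nat \<Rightarrow> complex"
  assumes P: "psd_matrix J M" and J: "finite J" "m \<in> J" and r: "M m m = complex_of_real r" "r \<noteq> 0"
  defines "t \<equiv> - (\<Sum>i\<in>J. M m i * d i) / M m m"
  shows "sesq J (Schur_complement M m) d d
    = sesq J M (\<lambda>j. d j + (if j = m then t else 0)) (\<lambda>j. d j + (if j = m then t else 0))"
proof -
  define b where "b = (\<Sum>i\<in>J. M m i * d i)"
  have cb: "(\<Sum>k\<in>J. cnj (d k) * M k m) = cnj b"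
  proof -
    have "(\<Sum>k\<in>J. cnj (d k) * M k m) = (\<Sum>k\<in>J. cnj (M m k * d k))"
      by (rule sum.cong) (auto simp: psd_matrix_hermitian[OF P J(1,2)] mult.commute)
    then show ?thesis by (simp add: b_def)
  qed
  have "sesq J (Schur_complement M m) d d
      = sesq J M d d - (\<Sum>k\<in>J. \<Sum>i\<in>J. (cnj (d k) * M k m) * (M m i * d i) / M m m)"
    unfolding sesq_def Schur_complement_def by (simp add: algebra_simps sum_subtractf)
  also have "(\<Sum>k\<in>J. \<Sum>i\<in>J. (cnj (d k) * M k m) * (M m i * d i) / M m m)
      = (\<Sum>k\<in>J. cnj (d k) * M k m) * b / M m m"
    by (simp add: b_def sum_product sum_divide_distrib mult.assoc)
  finally have lhs: "sesq J (Schur_complement M m) d d = sesq J M d d - cnj b * b / M m m"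
    unfolding cb .
  have "(\<Sum>k\<in>J. cnj (if k = m then t else 0) * M k m) = cnj t * M m m"
    using J by (simp add: if_distrib[of "\<lambda>s. cnj s * _"] cong: if_cong)
  then have rhs: "sesq J M (\<lambda>j. d j + (if j = m then t else 0)) (\<lambda>j. d j + (if j = m then t else 0))
      = sesq J M d d + cnj b * t + cnj t * b + cnj t * M m m * t"
    unfolding sesq_add_left sesq_add_right sesq_delta_right[OF J] sesq_delta_left[OF J] cb b_def[symmetric]
    by (simp add: mult.commute)
  moreover have "cnj b * t + cnj t * b + cnj t * M m m * t = - (cnj b * b / M m m)"
    unfolding t_def b_def[symmetric] r(1) using r(2) by (simp add: field_simps)
  ultimately show ?thesis using lhs by (simp add: add.assoc)
qed

lemma psd_matrix_Schur_complement:
  assumes P: "psd_matrix J M" and J: "finite J" "m \<in> J" and r: "M m m = complex_of_real r" "r > 0"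
  shows "psd_matrix J (Schur_complement M m)"
  using P sesq_Schur_complement[OF P J r(1)] r(2) unfolding psd_matrix_def by simp

lemma trace_prod_insert_zero:
  assumes "finite J" "m \<notin> J" "\<And>i. i \<in> insert m J \<Longrightarrow> X m i = 0" "\<And>k. k \<in> insert m J \<Longrightarrow> X k m = 0"
  shows "trace_prod (insert m J) X N = trace_prod J X N"
proof -
  have "trace_prod (insert m J) X N = (\<Sum>k\<in>insert m J. \<Sum>i\<in>J. X k i * N i k)"
    unfolding trace_prod_def
  proof (rule sum.cong[OF refl])
    fix k assume k: "k \<in> insert m J"
    show "(\<Sum>i\<in>insert m J. X k i * N i k) = (\<Sum>i\<in>J. X k i * N i k)"
      using assms(1,2) assms(4)[OF k] by (simp add: sum.insert)
  qed
  also have "\<dots> = (\<Sum>i\<in>J. X m i * N i m) + trace_prod J X N"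
    unfolding trace_prod_def using assms(1,2) by (simp add: sum.insert)
  also have "(\<Sum>i\<in>J. X m i * N i m) = 0"
    by (rule sum.neutral) (use assms(3) in auto)
  finally show ?thesis by simp
qed

lemma trace_prod_Schur_complement:
  assumes P: "psd_matrix J W" and J: "finite J" "m \<in> J" and nz: "W m m \<noteq> 0"
  shows "trace_prod J W N
    = trace_prod J (Schur_complement W m) N + sesq J N (\<lambda>j. W j m) (\<lambda>j. W j m) / W m m"
proof -
  have "W k i * N i k = Schur_complement W m k i * N i k + W k m * W m i * N i k / W m m" for k i
    unfolding Schur_complement_def using nz by (simp add: field_simps)
  then have "trace_prod J W N
      = trace_prod J (Schur_complement W m) N + (\<Sum>k\<in>J. \<Sum>i\<in>J. W k m * W m i * N i k) / W m m"
    unfolding trace_prod_def by (simp add: sum.distrib sum_divide_distrib)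
  also have "(\<Sum>k\<in>J. \<Sum>i\<in>J. W k m * W m i * N i k) = sesq J N (\<lambda>j. W j m) (\<lambda>j. W j m)"
  proof -
    have "sesq J N (\<lambda>j. W j m) (\<lambda>j. W j m) = (\<Sum>i\<in>J. \<Sum>k\<in>J. W m i * N i k * W k m)"
      unfolding sesq_def by (intro sum.cong refl) (simp add: psd_matrix_hermitian[OF P J])
    also have "\<dots> = (\<Sum>k\<in>J. \<Sum>i\<in>J. W k m * W m i * N i k)"
      by (subst sum.swap) (simp add: algebra_simps)
    finally show ?thesis by simp
  qed
  finally show ?thesis .
qed

text \<open>Eliminate one index at a time, splitting off a rank-one part with a Schur complement.\<close>

lemma psd_matrix_trace_prod_nonneg:
  assumes "finite J" "psd_matrix J W" "psd_matrix J N"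
  shows "0 \<le> Re (trace_prod J W N)"
  using assms
proof (induction J arbitrary: W rule: finite_induct)
  case empty
  then show ?case by (simp add: trace_prod_def)
next
  case (insert m J)
  let ?J = "insert m J"
  have fJ: "finite ?J" and mJ: "m \<in> ?J" using insert by auto
  have N: "psd_matrix J N" by (rule psd_matrix_subset[OF fJ _ insert.prems(2)]) auto
  have d: "Im (W m m) = 0" "Re (W m m) \<ge> 0" using psd_matrix_diag[OF insert.prems(1) fJ mJ] by auto
  show ?case
  proof (cases "Re (W m m) = 0")
    case True
    then have z: "W m m = 0" using d by (simp add: complex_eq_iff)
    have r: "W m i = 0" if "i \<in> ?J" for i by (rule psd_matrix_zero_diag_row[OF insert.prems(1) fJ mJ that z])
    have "W k m = 0" if "k \<in> ?J" for k
      using psd_matrix_hermitian[OF insert.prems(1) fJ that mJ] r[OF that] by simp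
    then have "trace_prod ?J W N = trace_prod J W N"
      using r by (intro trace_prod_insert_zero[OF insert(1,2)]) auto
    moreover have "0 \<le> Re (trace_prod J W N)"
      by (rule insert.IH[OF psd_matrix_subset[OF fJ _ insert.prems(1)] N]) auto
    ultimately show ?thesis by simp
  next
    case False
    then have rp: "Re (W m m) > 0" using d by simp
    have wmm: "W m m = complex_of_real (Re (W m m))" using d by (simp add: complex_eq_iff)
    then have nz: "W m m \<noteq> 0" using rp by auto
    let ?W' = "Schur_complement W m"
    have W': "psd_matrix ?J ?W'" by (rule psd_matrix_Schur_complement[OF insert.prems(1) fJ mJ wmm rp])
    have "trace_prod ?J ?W' N = trace_prod J ?W' N"
      using nz by (intro trace_prod_insert_zero[OF insert(1,2)]) (auto simp: Schur_complement_def)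
    moreover have "0 \<le> Re (trace_prod J ?W' N)"
      by (rule insert.IH[OF psd_matrix_subset[OF fJ _ W'] N]) auto
    moreover have "0 \<le> Re (sesq ?J N (\<lambda>j. W j m) (\<lambda>j. W j m) / W m m)"
      using insert.prems(2) rp unfolding psd_matrix_def by (subst wmm) (simp add: Re_divide_of_real)
    ultimately show ?thesis
      unfolding trace_prod_Schur_complement[OF insert.prems(1) fJ mJ nz] by simp
  qed
qed

lemma sesq_diff_matrix: "sesq J (\<lambda>i k. A i k - B i k) x y = sesq J A x y - sesq J B x y"
  unfolding sesq_def by (simp add: algebra_simps sum_subtractf)

lemma sesq_scalar_matrix:
  assumes "finite J"
  shows "sesq J (\<lambda>i k. if i = k then complex_of_real a else 0) d d = of_real (a * (\<Sum>i\<in>J. (cmod (d i))\<^sup>2))"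
proof -
  have "(\<Sum>k\<in>J. cnj (d i) * (if i = k then complex_of_real a else 0) * d k) = of_real a * (cnj (d i) * d i)"
    if "i \<in> J" for i
  proof -
    have "(\<Sum>k\<in>J. cnj (d i) * (if i = k then complex_of_real a else 0) * d k)
        = (\<Sum>k\<in>J. if k = i then of_real a * (cnj (d i) * d i) else 0)"
      by (rule sum.cong) (auto simp: mult_ac)
    then show ?thesis using that assms by simp
  qed
  then have "sesq J (\<lambda>i k. if i = k then complex_of_real a else 0) d d
      = (\<Sum>i\<in>J. of_real a * (cnj (d i) * d i))"
    unfolding sesq_def by (rule sum.cong[OF refl])
  also have "\<dots> = (\<Sum>i\<in>J. of_real (a * (cmod (d i))\<^sup>2))"
    by (intro sum.cong refl) (metis complex_norm_square mult.commute of_real_mult)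
  finally show ?thesis by (simp add: sum_distrib_left)
qed

lemma sesq_sum_outer_products:
  "sesq J (\<lambda>i k. \<Sum>n\<in>F. u n i * cnj (u n k)) d d = of_real (\<Sum>n\<in>F. (cmod (\<Sum>i\<in>J. cnj (d i) * u n i))\<^sup>2)"
proof -
  define s where "s n = (\<Sum>i\<in>J. cnj (d i) * u n i)" for n
  have "(\<Sum>n\<in>F. s n * cnj (s n)) = (\<Sum>n\<in>F. \<Sum>i\<in>J. \<Sum>k\<in>J. cnj (d i) * u n i * (d k * cnj (u n k)))"
    unfolding s_def by (simp add: sum_product)
  also have "\<dots> = (\<Sum>i\<in>J. \<Sum>k\<in>J. \<Sum>n\<in>F. cnj (d i) * u n i * (d k * cnj (u n k)))"
    by (subst sum.swap) (rule sum.cong[OF refl], rule sum.swap)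
  also have "\<dots> = sesq J (\<lambda>i k. \<Sum>n\<in>F. u n i * cnj (u n k)) d d"
    unfolding sesq_def by (simp add: sum_distrib_left sum_distrib_right mult_ac)
  moreover have "s n * cnj (s n) = complex_of_real ((cmod (s n))\<^sup>2)" for n
    by (metis complex_norm_square)
  ultimately show ?thesis by (simp add: s_def)
qed

lemma psd_matrix_bessel_gap:
  assumes u: "bessel_family I u c" and J: "finite J" "J \<subseteq> I" and F: "finite F" "F \<subseteq> I"
  shows "psd_matrix J (\<lambda>i k. (if i = k then complex_of_real (c\<^sup>2) else 0) - (\<Sum>n\<in>F. u n i * cnj (u n k)))"
    (is "psd_matrix J ?N")
  unfolding psd_matrix_def
proof
  fix d :: "nat \<Rightarrow> complex"
  let ?v = "\<lambda>k. \<Sum>i\<in>J. d i * basis_vec i k"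
  have v: "?v \<in> l2 I" by (rule basis_combination_l2[OF J])
  have "vinner ?v (u n) = (\<Sum>i\<in>J. cnj (d i) * u n i)" for n
    by (subst vinner_finite_support[OF J(1)]) (auto simp: basis_combination_apply[OF J(1)])
  moreover have "(vnorm ?v)\<^sup>2 = (\<Sum>i\<in>J. (cmod (d i))\<^sup>2)"
    by (subst vnorm_sq_finite_support[OF J(1)]) (auto simp: basis_combination_apply[OF J(1)])
  ultimately have "(\<Sum>n\<in>F. (cmod (\<Sum>i\<in>J. cnj (d i) * u n i))\<^sup>2) \<le> c\<^sup>2 * (\<Sum>i\<in>J. (cmod (d i))\<^sup>2)"
    using bessel_familyD(3)[OF u v F] by simp
  then show "Im (sesq J ?N d d) = 0 \<and> 0 \<le> Re (sesq J ?N d d)"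
    unfolding sesq_diff_matrix sesq_scalar_matrix[OF J(1)] sesq_sum_outer_products by simp
qed

lemma sum_sesq_eq_trace_prod:
  "(\<Sum>n\<in>F. sesq J M (u n) (u n)) = of_real a * (\<Sum>k\<in>J. M k k)
    - trace_prod J M (\<lambda>i k. (if i = k then complex_of_real a else 0) - (\<Sum>n\<in>F. u n i * cnj (u n k)))"
proof -
  have "(\<Sum>n\<in>F. sesq J M (u n) (u n)) = (\<Sum>k\<in>J. \<Sum>i\<in>J. \<Sum>n\<in>F. cnj (u n k) * M k i * u n i)"
    unfolding sesq_def by (subst sum.swap) (rule sum.cong[OF refl], rule sum.swap)
  also have "\<dots> = (\<Sum>k\<in>J. \<Sum>i\<in>J. M k i * (\<Sum>n\<in>F. u n i * cnj (u n k)))"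
    by (simp add: sum_distrib_left mult_ac)
  moreover have "(\<Sum>k\<in>J. \<Sum>i\<in>J. M k i * (if i = k then complex_of_real a else 0)) = of_real a * (\<Sum>k\<in>J. M k k)"
    by (cases "finite J") (simp_all add: if_distrib[of "\<lambda>s. _ * s"] sum_distrib_left mult.commute cong: if_cong)
  ultimately show ?thesis
    unfolding trace_prod_def by (simp add: right_diff_distrib sum_subtractf)
qed

section \<open>Positive trace-class operators\<close>

definition positive_trace_class :: "nat set \<Rightarrow> op \<Rightarrow> bool" where
  "positive_trace_class I W \<longleftrightarrow> positive_op I W
     \<and> summable (\<lambda>n. if n \<in> I then Re (W (basis_vec n) n) else 0)"

definition re_trace :: "nat set \<Rightarrow> op \<Rightarrow> real" where
  "re_trace I W = (\<Sum>n. if n \<in> I then Re (W (basis_vec n) n) else 0)"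

lemma density_operator_positive_trace_class:
  "density_operator I W \<Longrightarrow> positive_trace_class I W"
  unfolding density_operator_def positive_trace_class_def vinner_basis_vec by simp

lemma positive_op_bounded_lin: "positive_op I W \<Longrightarrow> bounded_lin I W (opnorm I W)"
  by (rule bop_bounded_lin) (simp add: positive_op_def)

lemma positive_opD:
  "positive_op I W \<Longrightarrow> x \<in> l2 I \<Longrightarrow> Im (vinner x (W x)) = 0 \<and> Re (vinner x (W x)) \<ge> 0"
  by (simp add: positive_op_def)

lemma positive_op_diag_nonneg: "positive_op I W \<Longrightarrow> k \<in> I \<Longrightarrow> Re (W (basis_vec k) k) \<ge> 0"
  using positive_opD[OF _ basis_vec_l2] by (simp add: vinner_basis_vec)

lemma re_trace_nonneg: "positive_trace_class I W \<Longrightarrow> re_trace I W \<ge> 0"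
  unfolding positive_trace_class_def re_trace_def
  by (auto intro!: suminf_nonneg simp: positive_op_diag_nonneg)

lemma sum_diag_le_re_trace:
  assumes "positive_trace_class I W" "finite J" "J \<subseteq> I"
  shows "Re (\<Sum>k\<in>J. W (basis_vec k) k) \<le> re_trace I W"
proof -
  have "Re (\<Sum>k\<in>J. W (basis_vec k) k) = (\<Sum>k\<in>J. if k \<in> I then Re (W (basis_vec k) k) else 0)"
    using assms(3) by (auto simp: Re_sum intro!: sum.cong)
  also have "\<dots> \<le> re_trace I W"
    using assms unfolding positive_trace_class_def re_trace_def
    by (intro sum_le_suminf) (auto simp: positive_op_diag_nonneg)
  finally show ?thesis .
qed

lemma vinner_op_basis_combination:
  assumes W: "bounded_lin I W c" and J: "finite J" "J \<subseteq> I"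
  shows "vinner (\<lambda>k. \<Sum>i\<in>J. d i * basis_vec i k) (W (\<lambda>k. \<Sum>i\<in>J. d i * basis_vec i k))
       = sesq J (\<lambda>k i. W (basis_vec i) k) d d"
proof -
  let ?v = "\<lambda>k. \<Sum>i\<in>J. d i * basis_vec i k"
  have "W ?v = (\<lambda>k. \<Sum>i\<in>J. d i * W (basis_vec i) k)"
    using bounded_lin_sum[OF W J(1), of basis_vec d] J basis_vec_l2 by blast
  then have "vinner ?v (W ?v) = (\<Sum>k\<in>J. cnj (d k) * (\<Sum>i\<in>J. d i * W (basis_vec i) k))"
    by (subst vinner_finite_support[OF J(1)]) (auto simp: basis_combination_apply[OF J(1)])
  also have "\<dots> = sesq J (\<lambda>k i. W (basis_vec i) k) d d"
    unfolding sesq_def by (simp add: sum_distrib_left mult_ac)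
  finally show ?thesis .
qed

lemma psd_matrix_positive_op:
  assumes W: "positive_op I W" and J: "finite J" "J \<subseteq> I"
  shows "psd_matrix J (\<lambda>k i. W (basis_vec i) k)"
  unfolding psd_matrix_def
  using positive_opD[OF W basis_combination_l2[OF J]]
  unfolding vinner_op_basis_combination[OF positive_op_bounded_lin[OF W] J]
  by blast

lemma vinner_op_trunc_tendsto:
  assumes W: "bounded_lin I W c" and x: "x \<in> l2 I"
  shows "(\<lambda>K. vinner (trunc K x) (W (trunc K x))) \<longlonglongrightarrow> vinner x (W x)"
proof -
  let ?y = "\<lambda>K. trunc K x" and ?r = "\<lambda>K. vnorm (\<lambda>n. x n - trunc K x n)"
  have bound: "cmod (vinner (?y K) (W (?y K)) - vinner x (W x)) \<le> 2 * c * vnorm x * ?r K" for K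
  proof -
    have y: "?y K \<in> l2 I" by (rule trunc_l2[OF x])
    have d: "(\<lambda>n. x n - ?y K n) \<in> l2 I" by (rule l2_diff[OF x y])
    have Wx: "W x \<in> l2 I" and Wy: "W (?y K) \<in> l2 I" using bounded_lin_l2[OF W] x y by auto
    have "vinner x (W x) - vinner (?y K) (W (?y K))
        = vinner (\<lambda>n. x n - ?y K n) (W x) + vinner (?y K) (\<lambda>n. W x n - W (?y K) n)"
      unfolding vinner_diff_left[OF x y Wx] vinner_diff_right[OF y Wx Wy] by simp
    then have "cmod (vinner (?y K) (W (?y K)) - vinner x (W x))
        \<le> cmod (vinner (\<lambda>n. x n - ?y K n) (W x)) + cmod (vinner (?y K) (\<lambda>n. W x n - W (?y K) n))"
      by (metis norm_minus_commute norm_triangle_ineq)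
    also have "\<dots> \<le> ?r K * vnorm (W x) + vnorm (?y K) * vnorm (\<lambda>n. W x n - W (?y K) n)"
      by (intro add_mono vinner_Cauchy_Schwarz[OF d Wx] vinner_Cauchy_Schwarz[OF y l2_diff[OF Wx Wy]])
    also have "\<dots> \<le> ?r K * (c * vnorm x) + vnorm x * (c * ?r K)"
    proof (rule add_mono)
      show "?r K * vnorm (W x) \<le> ?r K * (c * vnorm x)"
        by (rule mult_left_mono[OF bounded_lin_bound[OF W x] vnorm_nonneg[OF d]])
      show "vnorm (?y K) * vnorm (\<lambda>n. W x n - W (?y K) n) \<le> vnorm x * (c * ?r K)"
        by (rule mult_mono[OF vnorm_trunc_le[OF x] bounded_lin_dist[OF W x y] vnorm_nonneg[OF x]
              vnorm_nonneg[OF l2_diff[OF Wx Wy]]])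
    qed
    finally show ?thesis by (simp add: algebra_simps)
  qed
  have "(\<lambda>K. 2 * c * vnorm x * ?r K) \<longlonglongrightarrow> 0"
    by (rule tendsto_mult_right_zero[OF vnorm_diff_trunc_tendsto[OF x]])
  then have "(\<lambda>K. vinner (?y K) (W (?y K)) - vinner x (W x)) \<longlonglongrightarrow> 0"
    by (rule Lim_null_comparison[OF always_eventually, rotated]) (use bound in simp)
  then show ?thesis by (simp add: LIM_zero_iff)
qed

lemma vinner_op_lincomb:
  assumes W: "bounded_lin I W c" and x: "x \<in> l2 I" and y: "y \<in> l2 I"
  shows "vinner (\<lambda>n. a * y n + x n) (W (\<lambda>n. a * y n + x n))
    = cnj a * (a * vinner y (W y) + vinner y (W x)) + (a * vinner x (W y) + vinner x (W x))"
proof -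
  have Wx: "W x \<in> l2 I" and Wy: "W y \<in> l2 I" using bounded_lin_l2[OF W] x y by auto
  show ?thesis
    unfolding bounded_lin_lincomb[OF W y x] vinner_lincomb_left[OF y x l2_lincomb[OF Wy Wx]]
      vinner_lincomb_right[OF y Wy Wx] vinner_lincomb_right[OF x Wy Wx] ..
qed

lemma positive_op_Cauchy_Schwarz:
  assumes W: "positive_op I W" and x: "x \<in> l2 I" and y: "y \<in> l2 I"
  shows "(cmod (vinner x (W y)))\<^sup>2 \<le> Re (vinner x (W x)) * Re (vinner y (W y))"
proof -
  define p q A B where "p = vinner x (W y)" and "q = vinner y (W x)"
    and "A = vinner x (W x)" and "B = vinner y (W y)"
  have A: "Im A = 0" "Re A \<ge> 0" and B: "Im B = 0" "Re B \<ge> 0"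
    using positive_opD[OF W x] positive_opD[OF W y] by (auto simp: A_def B_def)
  have Q: "Im (cnj a * (a * B + q) + (a * p + A)) = 0 \<and> Re (cnj a * (a * B + q) + (a * p + A)) \<ge> 0" for a
    using positive_opD[OF W l2_lincomb[OF y x, of a]]
      vinner_op_lincomb[OF positive_op_bounded_lin[OF W] x y, of a]
    by (simp add: A_def B_def p_def q_def)
  have "q = cnj p"
    using Q[of 1] Q[of \<i>] A B by (simp add: complex_eq_iff algebra_simps)
  then have quadratic: "0 \<le> t\<^sup>2 * (cmod p)\<^sup>2 * Re B - 2 * t * (cmod p)\<^sup>2 + Re A" for t :: real
    using Q[of "- (of_real t * cnj p)"] B cmod_power2[of p] by (simp add: algebra_simps power2_eq_square)
  show ?thesis
  proof (cases "p = 0 \<or> Re B = 0")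
    case True
    have "(cmod p)\<^sup>2 \<le> 0" if "p \<noteq> 0"
    proof -
      from that True have "Re B = 0" "(cmod p)\<^sup>2 > 0" by auto
      with quadratic[of "(Re A + 1) / (2 * (cmod p)\<^sup>2)"] show ?thesis by (simp add: field_simps)
    qed
    then show ?thesis using A B by (cases "p = 0") (auto simp: p_def A_def B_def)
  next
    case False
    then have "Re B > 0" using B by simp
    with quadratic[of "1 / Re B"] have "(cmod p)\<^sup>2 / Re B \<le> Re A"
      by (simp add: field_simps power2_eq_square)
    with \<open>Re B > 0\<close> show ?thesis by (simp add: p_def A_def B_def divide_le_eq)
  qed
qed

lemma positive_bessel_trunc_sum_le:
  assumes W: "positive_trace_class I W" and u: "bessel_family I u c" and F: "finite F" "F \<subseteq> I"
  shows "(\<Sum>n\<in>F. Re (vinner (trunc K (u n)) (W (trunc K (u n))))) \<le> c\<^sup>2 * re_trace I W"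
proof -
  define J where "J = I \<inter> {..<K}"
  have J: "finite J" "J \<subseteq> I" by (auto simp: J_def)
  have Wp: "positive_op I W" using W by (simp add: positive_trace_class_def)
  let ?M = "\<lambda>k i. W (basis_vec i) k"
  let ?N = "\<lambda>i k. (if i = k then complex_of_real (c\<^sup>2) else 0) - (\<Sum>n\<in>F. u n i * cnj (u n k))"
  have "vinner (trunc K (u n)) (W (trunc K (u n))) = sesq J ?M (u n) (u n)" if "n \<in> F" for n
    unfolding J_def trunc_eq_basis_combination[OF bessel_familyD(2)[OF u subsetD[OF F(2) that]]]
    using vinner_op_basis_combination[OF positive_op_bounded_lin[OF Wp] J, of "u n"] J_def by simp
  then have "(\<Sum>n\<in>F. Re (vinner (trunc K (u n)) (W (trunc K (u n))))) = Re (\<Sum>n\<in>F. sesq J ?M (u n) (u n))"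
    by (simp add: Re_sum)
  also have "\<dots> = c\<^sup>2 * Re (\<Sum>k\<in>J. ?M k k) - Re (trace_prod J ?M ?N)"
    unfolding sum_sesq_eq_trace_prod[where a="c\<^sup>2"] by simp
  also have "\<dots> \<le> c\<^sup>2 * re_trace I W"
    using psd_matrix_trace_prod_nonneg[OF J(1) psd_matrix_positive_op[OF Wp J]
        psd_matrix_bessel_gap[OF u J F]]
      mult_left_mono[OF sum_diag_le_re_trace[OF W J], of "c\<^sup>2"]
    by simp
  finally show ?thesis .
qed

lemma positive_bessel_sum_le:
  assumes W: "positive_trace_class I W" and u: "bessel_family I u c" and F: "finite F" "F \<subseteq> I"
  shows "(\<Sum>n\<in>F. Re (vinner (u n) (W (u n)))) \<le> c\<^sup>2 * re_trace I W"
proof (rule LIMSEQ_le_const2)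
  show "(\<lambda>K. \<Sum>n\<in>F. Re (vinner (trunc K (u n)) (W (trunc K (u n))))) \<longlonglongrightarrow> (\<Sum>n\<in>F. Re (vinner (u n) (W (u n))))"
    using W F bessel_familyD(2)[OF u]
    by (intro tendsto_sum tendsto_Re vinner_op_trunc_tendsto[OF positive_op_bounded_lin])
      (auto simp: positive_trace_class_def)
qed (use positive_bessel_trunc_sum_le[OF W u F] in blast)

lemma positive_bessel_abs_sum_le:
  assumes W: "positive_trace_class I W" and u: "bessel_family I u c" and u': "bessel_family I u' c'"
    and F: "finite F" "F \<subseteq> I"
  shows "(\<Sum>n\<in>F. cmod (vinner (u n) (W (u' n)))) \<le> c * c' * re_trace I W"
proof -
  have Wp: "positive_op I W" using W by (simp add: positive_trace_class_def)
  define A where "A n = Re (vinner (u n) (W (u n)))" for n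
  define B where "B n = Re (vinner (u' n) (W (u' n)))" for n
  have un: "u n \<in> l2 I" "u' n \<in> l2 I" if "n \<in> F" for n
    using bessel_familyD(2)[OF u] bessel_familyD(2)[OF u'] that F by auto
  have A: "A n \<ge> 0" and B: "B n \<ge> 0" if "n \<in> F" for n
    using positive_opD[OF Wp un(1)[OF that]] positive_opD[OF Wp un(2)[OF that]] by (auto simp: A_def B_def)
  have "cmod (vinner (u n) (W (u' n))) \<le> sqrt (A n * B n)" if "n \<in> F" for n
    unfolding A_def B_def by (rule real_le_rsqrt[OF positive_op_Cauchy_Schwarz[OF Wp un[OF that]]])
  then have "(\<Sum>n\<in>F. cmod (vinner (u n) (W (u' n)))) \<le> (\<Sum>n\<in>F. sqrt (A n) * sqrt (B n))"
    by (intro sum_mono) (simp add: real_sqrt_mult)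
  also have "\<dots> \<le> c * c' * re_trace I W"
  proof (rule power2_le_imp_le)
    have "(\<Sum>n\<in>F. sqrt (A n) * sqrt (B n))\<^sup>2 \<le> (\<Sum>n\<in>F. (sqrt (A n))\<^sup>2) * (\<Sum>n\<in>F. (sqrt (B n))\<^sup>2)"
      by (rule Cauchy_Schwarz_ineq_sum)
    also have "\<dots> = (\<Sum>n\<in>F. A n) * (\<Sum>n\<in>F. B n)"
      using A B by (simp cong: sum.cong)
    also have "\<dots> \<le> (c\<^sup>2 * re_trace I W) * (c'\<^sup>2 * re_trace I W)"
      unfolding A_def B_def
      by (intro mult_mono positive_bessel_sum_le[OF W u F] positive_bessel_sum_le[OF W u' F]
          mult_nonneg_nonneg re_trace_nonneg[OF W] sum_nonneg B[unfolded B_def]) auto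
    finally show "(\<Sum>n\<in>F. sqrt (A n) * sqrt (B n))\<^sup>2 \<le> (c * c' * re_trace I W)\<^sup>2"
      by (simp add: power2_eq_square mult_ac)
    show "0 \<le> c * c' * re_trace I W"
      using bessel_familyD(1)[OF u] bessel_familyD(1)[OF u'] re_trace_nonneg[OF W] by simp
  qed
  finally show ?thesis .
qed

lemma positive_bessel_summable:
  assumes W: "positive_trace_class I W" and u: "bessel_family I u c" and u': "bessel_family I u' c'"
  defines "f \<equiv> \<lambda>n. if n \<in> I then vinner (u n) (W (u' n)) else 0"
  shows "summable f" and "cmod (suminf f) \<le> c * c' * re_trace I W"
proof -
  have partial: "(\<Sum>n<N. norm (f n)) \<le> c * c' * re_trace I W" for N
  proof -
    have "(\<Sum>n<N. norm (f n)) = (\<Sum>n\<in>I \<inter> {..<N}. cmod (vinner (u n) (W (u' n))))"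
      unfolding f_def by (rule sum.mono_neutral_cong_right) auto
    also have "\<dots> \<le> c * c' * re_trace I W"
      by (rule positive_bessel_abs_sum_le[OF W u u']) auto
    finally show ?thesis .
  qed
  have abs: "summable (\<lambda>n. norm (f n))" by (rule summableI_nonneg_bounded[OF _ partial]) simp
  show "summable f" by (rule summable_norm_cancel[OF abs])
  show "cmod (suminf f) \<le> c * c' * re_trace I W"
    using summable_norm[OF abs] suminf_le_const[OF abs partial] by linarith
qed

section \<open>The states \<open>\<omega>\<close> and \<open>\<omega>\<^sub>P\<close> as continuous linear functionals\<close>

definition omega_term :: "nat set \<Rightarrow> op \<Rightarrow> op \<Rightarrow> nat \<Rightarrow> complex" where
  "omega_term I V X n = (if n \<in> I then V (X (basis_vec n)) n else 0)"

lemma omega_eq_suminf: "omega I V X = suminf (omega_term I V X)"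
  unfolding omega_def trace_def omega_term_def vinner_basis_vec comp_def ..

lemma omega_term_lincomb:
  assumes V: "bounded_lin I V v" and X: "bounded_lin I X x" and Y: "bounded_lin I Y y"
  shows "omega_term I V (opplus I (opscale I a X) Y) n = a * omega_term I V X n + omega_term I V Y n"
proof (cases "n \<in> I")
  case True
  then have e: "basis_vec n \<in> l2 I" by (rule basis_vec_l2)
  have "opplus I (opscale I a X) Y (basis_vec n) = (\<lambda>k. a * X (basis_vec n) k + Y (basis_vec n) k)"
    using e bounded_lin_l2[OF X e] by (simp add: opplus_def opscale_def)
  then show ?thesis
    using True bounded_lin_lincomb[OF V bounded_lin_l2[OF X e] bounded_lin_l2[OF Y e]]
    by (simp add: omega_term_def)
qed (simp add: omega_term_def)

lemma omega_summable_bound: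
  assumes W: "positive_trace_class I W" and X: "bounded_lin I X c"
  shows "summable (omega_term I W X)" "cmod (omega I W X) \<le> c * re_trace I W"
proof -
  have "omega_term I W X = (\<lambda>n. if n \<in> I then vinner (basis_vec n) (W (X (basis_vec n))) else 0)"
    unfolding omega_term_def vinner_basis_vec ..
  then show "summable (omega_term I W X)" "cmod (omega I W X) \<le> c * re_trace I W"
    using positive_bessel_summable[OF W bessel_family_basis bessel_family_columns[OF X]]
    unfolding omega_eq_suminf by simp_all
qed

lemma omega_compression_summable_bound:
  assumes W: "positive_trace_class I W" and R: "bounded_lin I R r" and X: "bounded_lin I X c"
  shows "summable (omega_term I (R \<circ> W \<circ> R) X)"
    "cmod (omega I (R \<circ> W \<circ> R) X) \<le> r * (r * c) * re_trace I W"
proof -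
  have RX: "bounded_lin I (R \<circ> X) (r * c)" by (rule bounded_lin_comp[OF R X])
  have Wb: "bounded_lin I W (opnorm I W)"
    using W by (simp add: positive_trace_class_def positive_op_bounded_lin)
  have "R (W (R (X (basis_vec n)))) n = vinner (row I R n) (W ((R \<circ> X) (basis_vec n)))" if "n \<in> I" for n
    using bounded_lin_apply_eq_vinner_row[OF R
        bounded_lin_l2[OF Wb bounded_lin_l2[OF RX basis_vec_l2[OF that]]]]
    by simp
  then have "omega_term I (R \<circ> W \<circ> R) X
      = (\<lambda>n. if n \<in> I then vinner (row I R n) (W ((R \<circ> X) (basis_vec n))) else 0)"
    by (simp add: omega_term_def fun_eq_iff)
  then show "summable (omega_term I (R \<circ> W \<circ> R) X)"
    "cmod (omega I (R \<circ> W \<circ> R) X) \<le> r * (r * c) * re_trace I W"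
    using positive_bessel_summable[OF W bessel_family_rows[OF R] bessel_family_columns[OF RX]]
    unfolding omega_eq_suminf by simp_all
qed

lemma omega_term_W_P:
  fixes P :: op
  assumes X: "bounded_lin I X c"
  defines "Q \<equiv> opminus I (idop I) P"
  shows "omega_term I (W_P I P W) X
    = (\<lambda>n. omega_term I (P \<circ> W \<circ> P) X n + omega_term I (Q \<circ> W \<circ> Q) X n)"
  using bounded_lin_l2[OF X basis_vec_l2] by (auto simp: omega_term_def W_P_def opplus_def Q_def)

lemma omega_W_P_summable_bound:
  assumes W: "positive_trace_class I W" and P: "bounded_lin I P p" and X: "bounded_lin I X c"
  shows "summable (omega_term I (W_P I P W) X)"
    "cmod (omega I (W_P I P W) X) \<le> (p\<^sup>2 + (1 + p)\<^sup>2) * c * re_trace I W"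
proof -
  let ?Q = "opminus I (idop I) P"
  have Q: "bounded_lin I ?Q (1 + p)" by (rule bounded_lin_complement[OF P])
  note sP = omega_compression_summable_bound[OF W P X]
    and sQ = omega_compression_summable_bound[OF W Q X]
  show "summable (omega_term I (W_P I P W) X)"
    unfolding omega_term_W_P[OF X] by (intro summable_add sP(1) sQ(1))
  have "omega I (W_P I P W) X = omega I (P \<circ> W \<circ> P) X + omega I (?Q \<circ> W \<circ> ?Q) X"
    unfolding omega_eq_suminf omega_term_W_P[OF X] by (intro suminf_add[symmetric] sP(1) sQ(1))
  then have "cmod (omega I (W_P I P W) X)
      \<le> cmod (omega I (P \<circ> W \<circ> P) X) + cmod (omega I (?Q \<circ> W \<circ> ?Q) X)"
    by (simp add: norm_triangle_ineq)
  also have "\<dots> \<le> (p\<^sup>2 + (1 + p)\<^sup>2) * c * re_trace I W"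
    using sP(2) sQ(2) by (simp add: power2_eq_square algebra_simps)
  finally show "cmod (omega I (W_P I P W) X) \<le> (p\<^sup>2 + (1 + p)\<^sup>2) * c * re_trace I W" .
qed

lemma suminf_lincomb:
  fixes f g :: "nat \<Rightarrow> 'a :: {real_normed_algebra, banach}"
  assumes "summable f" "summable g"
  shows "(\<Sum>n. a * f n + g n) = a * suminf f + suminf g"
  using suminf_add[OF summable_mult[OF assms(1)] assms(2), of a] suminf_mult[OF assms(1), of a] by simp

lemma cont_lin_functional_omega:
  assumes A: "A \<subseteq> bop I" and V: "bounded_lin I V v"
    and bound: "\<And>X c. bounded_lin I X c \<Longrightarrow> summable (omega_term I V X) \<and> cmod (omega I V X) \<le> C * c"
  shows "cont_lin_functional I A (omega I V)"
  unfolding cont_lin_functional_def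
proof (intro conjI ballI allI exI)
  fix X Y a assume "X \<in> A" "Y \<in> A"
  then have X: "bounded_lin I X (opnorm I X)" and Y: "bounded_lin I Y (opnorm I Y)"
    using A bop_bounded_lin by auto
  show "omega I V (opplus I (opscale I a X) Y) = a * omega I V X + omega I V Y"
    unfolding omega_eq_suminf omega_term_lincomb[OF V X Y]
    using bound[OF X] bound[OF Y] by (intro suminf_lincomb) auto
next
  fix X assume "X \<in> A"
  then show "cmod (omega I V X) \<le> C * opnorm I X"
    using A bop_bounded_lin bound by blast
qed

lemma cont_lin_functional_diff:
  assumes "cont_lin_functional I A f" "cont_lin_functional I A g"
  shows "cont_lin_functional I A (\<lambda>X. f X - g X)"
proof -
  obtain C D where C: "\<And>X. X \<in> A \<Longrightarrow> cmod (f X) \<le> C * opnorm I X"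
    and D: "\<And>X. X \<in> A \<Longrightarrow> cmod (g X) \<le> D * opnorm I X"
    using assms unfolding cont_lin_functional_def by blast
  have "cmod (f X - g X) \<le> (C + D) * opnorm I X" if "X \<in> A" for X
    using norm_triangle_ineq4[of "f X" "g X"] C[OF that] D[OF that] by (simp add: distrib_right)
  moreover have "f (opplus I (opscale I a X) Y) - g (opplus I (opscale I a X) Y)
      = a * (f X - g X) + (f Y - g Y)" if "X \<in> A" "Y \<in> A" for X Y a
    using assms that unfolding cont_lin_functional_def by (simp add: algebra_simps)
  ultimately show ?thesis unfolding cont_lin_functional_def by blast
qed

lemma cont_lin_functional_mark:
  assumes A: "A \<subseteq> bop I" and W: "density_operator I W" and P: "P \<in> bop I"
  shows "cont_lin_functional I A (\<lambda>X. omega I W X - omega I (W_P I P W) X)"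
proof (rule cont_lin_functional_diff)
  have Wt: "positive_trace_class I W" by (rule density_operator_positive_trace_class[OF W])
  have Wb: "bounded_lin I W (opnorm I W)"
    using Wt by (simp add: positive_trace_class_def positive_op_bounded_lin)
  have Pb: "bounded_lin I P (opnorm I P)" by (rule bop_bounded_lin[OF P])
  show "cont_lin_functional I A (omega I W)"
    using omega_summable_bound[OF Wt] re_trace_nonneg[OF Wt]
    by (intro cont_lin_functional_omega[OF A Wb]) (simp add: mult.commute)
  have "bounded_lin I (W_P I P W)
      (opnorm I P * opnorm I W * opnorm I P + (1 + opnorm I P) * opnorm I W * (1 + opnorm I P))"
    unfolding W_P_def
    by (intro bounded_lin_opplus bounded_lin_comp Pb Wb bounded_lin_complement)
  then show "cont_lin_functional I A (omega I (W_P I P W))"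
    using omega_W_P_summable_bound[OF Wt Pb]
    by (intro cont_lin_functional_omega[OF A]) (auto simp: mult_ac)
qed

lemma CSIP_causal_projectionI:
  assumes "density_operator I W" "P \<in> A" "projection I P" "t1 > 0" "countable E"
    and "\<forall>t0\<in>E. \<exists>r>0. \<forall>t\<in>E. \<bar>t - t0\<bar> < r \<longrightarrow> t = t0"
    and "\<forall>t\<in>{0<..t1} - E. omega I W (tau I U t P) \<noteq> omega I (W_P I P W) (tau I U t P)"
  shows "CSIP_causal I A U"
  unfolding CSIP_causal_def
proof (intro exI conjI)
  show "self_adjoint I P" using assms(3) by (simp add: projection_def)
qed (fact assms)+

section \<open>Real zeros of holomorphic functions\<close>

lemma real_zeros_isolated:
  assumes g: "g holomorphic_on S" "open S" "connected S" and R: "complex_of_real ` {a..b} \<subseteq> S"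
    and t1: "t1 \<in> {a..b}" "g (of_real t1) \<noteq> 0"
    and t0: "t0 \<in> {a..b}" "g (of_real t0) = 0"
  shows "\<exists>r>0. \<forall>t\<in>{t \<in> {a..b}. g (of_real t) = 0}. \<bar>t - t0\<bar> < r \<longrightarrow> t = t0"
proof -
  obtain r where r: "0 < r" "\<And>z. z \<in> ball (of_real t0) r - {of_real t0} \<Longrightarrow> g z \<noteq> 0"
    by (rule isolated_zeros[OF g _ t0(2) _ t1(2)]) (use R t0(1) t1(1) in auto)
  have "t = t0" if "g (of_real t) = 0" "\<bar>t - t0\<bar> < r" for t
  proof (rule ccontr)
    assume "t \<noteq> t0"
    with that(2) have "of_real t \<in> ball (complex_of_real t0) r - {of_real t0}"
      by (simp add: dist_real_def abs_minus_commute)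
    with r(2) that(1) show False by blast
  qed
  with r(1) show ?thesis by blast
qed

lemma real_zeros_countable:
  assumes g: "g holomorphic_on S" "open S" "connected S" and R: "complex_of_real ` {a..b} \<subseteq> S"
    and t1: "t1 \<in> {a..b}" "g (of_real t1) \<noteq> 0"
  shows "countable {t \<in> {a..b}. g (of_real t) = 0}"
proof -
  let ?Z = "complex_of_real ` {t \<in> {a..b}. g (of_real t) = 0}"
  have "?Z sparse_in S"
    unfolding sparse_in_open[OF g(2)]
  proof (intro ballI notI)
    fix y assume y: "y \<in> S" "y islimpt ?Z"
    have "g (of_real t1) = 0"
      by (rule analytic_continuation[OF g _ y]) (use R t1(1) in auto)
    with t1(2) show False by simp
  qed
  then have "countable (S \<inter> ?Z)" by (rule sparse_imp_countable[OF g(2)])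
  moreover have "S \<inter> ?Z = ?Z" using R by auto
  ultimately have "countable ?Z" by simp
  then show ?thesis by (rule countable_image_inj_on) (simp add: inj_on_def)
qed

lemma open_strip: "open (strip l)"
  unfolding strip_def by (intro open_Collect_less continuous_intros)

lemma connected_strip: "connected (strip l)"
proof -
  have "strip l = {z. Im z < l} \<inter> {z. Im z > - l}" by (auto simp: strip_def)
  then show ?thesis
    by (simp add: convex_connected convex_Int convex_halfspace_Im_lt convex_halfspace_Im_gt)
qed

lemma of_real_in_strip: "l > 0 \<Longrightarrow> complex_of_real t \<in> strip l"
  by (simp add: strip_def)

theorem proposition13:
  fixes I :: "nat set" and A :: "op set" and U :: "real \<Rightarrow> op"
    and W P :: op and t1 :: real
  assumes "von_neumann_algebra I A"
    and "strongly_cont_unitary_rep I U"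
    and "\<forall>t. bij_betw (tau I U t) A A"
    and "\<forall>X\<in>A. \<forall>t0. ((\<lambda>t. opnorm I (opminus I (tau I U t X) (tau I U t0 X))) \<longlongrightarrow> 0) (at t0)"
    and "density_operator I W"
    and "P \<in> A" and "projection I P"
    and "analytic_elem I A U P"
    and "t1 > 0"
    and "omega I W (tau I U t1 P) \<noteq> omega I (W_P I P W) (tau I U t1 P)"
  shows "countable {t \<in> {0..t1}. omega I W (tau I U t P) = omega I (W_P I P W) (tau I U t P)}
     \<and> (\<forall>t0 \<in> {t \<in> {0..t1}. omega I W (tau I U t P) = omega I (W_P I P W) (tau I U t P)}.
          \<exists>r>0. \<forall>t \<in> {t \<in> {0..t1}. omega I W (tau I U t P) = omega I (W_P I P W) (tau I U t P)}.
             \<bar>t - t0\<bar> < r \<longrightarrow> t = t0)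
     \<and> CSIP_causal I A U"
proof -
  define S where "S = {t \<in> {0..t1}. omega I W (tau I U t P) = omega I (W_P I P W) (tau I U t P)}"
  have A: "A \<subseteq> bop I" using assms(1) by (simp add: von_neumann_algebra_def)
  obtain l f where l: "l > 0" and f: "\<And>t. f (complex_of_real t) = tau I U t P"
    and an: "\<And>\<eta>. cont_lin_functional I A \<eta> \<Longrightarrow> (\<lambda>z. \<eta> (f z)) analytic_on strip l"
    using assms(8) unfolding analytic_elem_def by blast
  define g where "g z = omega I W (f z) - omega I (W_P I P W) (f z)" for z
  have "g analytic_on strip l"
    unfolding g_def using assms(6) A by (intro an cont_lin_functional_mark[OF A assms(5)]) auto
  then have g: "g holomorphic_on strip l" "open (strip l)" "connected (strip l)"
    by (simp_all add: analytic_imp_holomorphic open_strip connected_strip)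
  have R: "complex_of_real ` {0..t1} \<subseteq> strip l" using of_real_in_strip[OF l] by auto
  have t1: "t1 \<in> {0..t1}" "g (of_real t1) \<noteq> 0" using assms(9,10) by (simp_all add: g_def f)
  have S_eq: "S = {t \<in> {0..t1}. g (of_real t) = 0}" by (simp add: S_def g_def f)
  have countable: "countable S"
    unfolding S_eq by (rule real_zeros_countable[OF g R t1])
  have isolated: "\<forall>t0\<in>S. \<exists>r>0. \<forall>t\<in>S. \<bar>t - t0\<bar> < r \<longrightarrow> t = t0"
    unfolding S_eq using real_zeros_isolated[OF g R t1] by blast
  have "CSIP_causal I A U"
    by (rule CSIP_causal_projectionI[OF assms(5-7,9) countable isolated]) (auto simp: S_def)
  then show ?thesis using countable isolated by (simp add: S_def)
qed

end
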